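(* Fix $i\in\{1,\dots,\underline m\}$. Suppose $(A,B,K,\underline b,d,\underline D_{[i]},W_{[i]})$ with $\underline D_{[i]}\in\mathbb{D}_+^{\underline m}$, $W_{[i]}\in\mathbb{D}_+^{m_w}$ satisfies condition (RPI$_i$). Consider the LMI in the variables $(\mathbf A,\mathbf B,\mathbf d,\mathbf K,\underline{\mathbf b},\hat{\underline{\mathbf D}}_{[i]},\hat{\mathbf W}_{[i]})$: $$\begin{bmatrix} \mathbf I & \mathbf 0 & \mathbf 0 & -\mathbf B^\top\underline P_i^\top & \mathbf 0 & \mathbf K\\ * & \hat{\underline{\mathbf D}}_{[i]} & \mathbf 0 & \underline{\mathbf b} & \mathbf 0 & \mathbf 0\\ * & * & \hat{\mathbf W}_{[i]} & \mathbf d & \mathbf 0 & \mathbf 0\\ * & * & * & 2\underline{\mathbf b}_i+\mathcal{L}^{B^\top\underline P_i^\top,\mathbf I}_{\mathbf B^\top\underline P_i^\top,\mathbf I} & \underline P_i & \underline P_i\mathbf A\\ * & * & * & * & \mathcal{L}^{F,W_{[i]}^{-1}}_{F,\hat{\mathbf W}_{[i]}} & \mathbf 0\\ * & * & * & * & * & \mathcal{L}^{\underline P,\underline D_{[i]}^{-1}}_{\underline P,\hat{\underline{\mathbf D}}_{[i]}}+\mathcal{L}^{K,\mathbf I}_{\mathbf K,\mathbf I} \end{bmatrix}\succ0 .$$ Then (a) this LMI is satisfied by $(\mathbf A,\mathbf B,\mathbf d,\mathbf K,\underline{\mathbf b},\hat{\underline{\mathbf D}}_{[i]},\hat{\mathbf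 W}_{[i]})=(A,B,d,K,\underline b,\underline D_{[i]}^{-1},W_{[i]}^{-1})$; and (b) any solution with $\hat{\underline{\mathbf D}}_{[i]}\in\mathbb{D}_+^{\underline m}$, $\hat{\mathbf W}_{[i]}\in\mathbb{D}_+^{m_w}$ is such that $(\mathbf A,\mathbf B,\mathbf K,\underline{\mathbf b},\mathbf d,\hat{\underline{\mathbf D}}_{[i]}^{-1},\hat{\mathbf W}_{[i]}^{-1})$ satisfies condition (RPI$_i$).
   Context: Notation: $M_i$ is the $i$-th row of a matrix $M$, $b_i$ the $i$-th entry of a vector $b$; $\mathbb{D}_+^m$ is the set of $m\times m$ diagonal matrices with positive diagonal; $\succ0$ means symmetric positive definite; $*$ denotes symmetric blocks; $\mathbf I,\mathbf 0$ identity and zero blocks of appropriate size (the first diagonal $\mathbf I$ is $n_u\times n_u$). For matrices $\mathbf L,L\in\mathbb{R}^{m\times n}$ and symmetric invertible $\mathbf D,D\in\mathbb{R}^{m\times m}$, $\mathcal{L}^{L,D}_{\mathbf L,\mathbf D}:=\mathbf L^\top D^{-1}L+L^\top D^{-1}\mathbf L-L^\top D^{-1}\mathbf D D^{-1}L$. Fixed data: $\underline P\in\mathbb{R}^{\underline m\times n_x}$, $F\in\mathbb{R}^{m_w\times n_x}$. Variables: $A\in\mathbb{R}^{n_x\times n_x}$, $B\in\mathbb{R}^{n_x\times n_u}$, $K\in\mathbb{R}^{n_u\times n_x}$, $\underline b\in\mathbb{R}^{\underline m}$, $d\in\mathbb{R}^{m_w}$ (bold versions of the same sizes). Condition (RPI$_i$)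 for $(A,B,K,\underline b,d,\underline D_{[i]},W_{[i]})$: $$\begin{bmatrix}2\underline b_i-\underline b^\top\underline D_{[i]}\underline b-d^\top W_{[i]}d & \underline P_i & \underline P_i(A+BK)\\ * & F^\top W_{[i]}F & \mathbf 0\\ * & * & \underline P^\top\underline D_{[i]}\underline P\end{bmatrix}\succ0.$$ *)

theory Defs
  imports "Jordan_Normal_Form.Matrix"
begin

fun hcat :: "'a::zero mat list \<Rightarrow> 'a mat" where
  "hcat [] = 0\<^sub>m 0 0"
| "hcat [X] = X"
| "hcat (X # Xs) = four_block_mat X (hcat Xs) (0\<^sub>m 0 (dim_col X)) (0\<^sub>m 0 (dim_col (hcat Xs)))"

fun vcat :: "'a::zero mat list \<Rightarrow> 'a mat" where
  "vcat [] = 0\<^sub>m 0 0"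
| "vcat [X] = X"
| "vcat (X # Xs) = four_block_mat X (0\<^sub>m (dim_row X) 0) (vcat Xs) (0\<^sub>m (dim_row (vcat Xs)) 0)"

definition block_mat :: "'a::zero mat list list \<Rightarrow> 'a mat" where
  "block_mat Xss = vcat (map hcat Xss)"

definition col_of :: "'a vec \<Rightarrow> 'a mat" where
  "col_of v = transpose_mat (mat_of_row v)"

definition row_mat :: "'a mat \<Rightarrow> nat \<Rightarrow> 'a mat" where
  "row_mat M i = mat_of_row (row M i)"

definition scal_mat :: "'a \<Rightarrow> 'a mat" where
  "scal_mat c = mat 1 1 (\<lambda>_. c)"

definition pos_def :: "real mat \<Rightarrow> bool" where
  "pos_def M \<longleftrightarrow> M \<in> carrier_mat (dim_row M) (dim_row M) \<and> transpose_mat M = M \<and>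
     (\<forall>v \<in> carrier_vec (dim_row M). v \<noteq> 0\<^sub>v (dim_row M) \<longrightarrow> v \<bullet> (M *\<^sub>v v) > 0)"

definition diag_pos :: "nat \<Rightarrow> real mat set" where
  "diag_pos m = {D. D \<in> carrier_mat m m \<and> diagonal_mat D \<and> (\<forall>j<m. D $$ (j,j) > 0)}"

definition minv :: "real mat \<Rightarrow> real mat" where
  "minv D = (SOME E. E \<in> carrier_mat (dim_row D) (dim_row D) \<and>
                     D * E = 1\<^sub>m (dim_row D) \<and> E * D = 1\<^sub>m (dim_row D))"

text \<open>The operator L^{L,D}_{Lb,Db} = Lb^T D^-1 L + L^T D^-1 Lb - L^T D^-1 Db D^-1 L.\<close>
definition Lop :: "real mat \<Rightarrow> real mat \<Rightarrow> real mat \<Rightarrow> real mat \<Rightarrow> real mat" where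
  "Lop L D Lb Db = transpose_mat Lb * minv D * L + transpose_mat L * minv D * Lb
                   - transpose_mat L * minv D * Db * minv D * L"

text \<open>Condition (RPI_i) for (A,B,K,b,d,D,W), with fixed data P (m x nx), F (mw x nx).
  Row index i is 0-based.\<close>
definition RPI :: "nat \<Rightarrow> real mat \<Rightarrow> real mat \<Rightarrow> nat \<Rightarrow> real mat \<Rightarrow> real mat \<Rightarrow> real mat
                   \<Rightarrow> real vec \<Rightarrow> real vec \<Rightarrow> real mat \<Rightarrow> real mat \<Rightarrow> bool" where
  "RPI nx P F i A B K b d D W \<longleftrightarrow> pos_def (block_mat
    [[scal_mat (2 * b $ i) - transpose_mat (col_of b) * D * col_of b
        - transpose_mat (col_of d) * W * col_of d,
      row_mat P i, row_mat P i * (A + B * K)],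
     [transpose_mat (row_mat P i), transpose_mat F * W * F, 0\<^sub>m nx nx],
     [transpose_mat (row_mat P i * (A + B * K)), 0\<^sub>m nx nx, transpose_mat P * D * P]])"

text \<open>The LMI of the theorem in the bold variables (Ab,Bb,db,Kb,bb,Dh,Wh), linearized around
  the data (B,K,D,W).\<close>
definition LMI :: "nat \<Rightarrow> nat \<Rightarrow> nat \<Rightarrow> nat \<Rightarrow> real mat \<Rightarrow> real mat \<Rightarrow> nat
                   \<Rightarrow> real mat \<Rightarrow> real mat \<Rightarrow> real mat \<Rightarrow> real mat
                   \<Rightarrow> real mat \<Rightarrow> real mat \<Rightarrow> real vec \<Rightarrow> real mat \<Rightarrow> real vec \<Rightarrow> real mat \<Rightarrow> real mat
                   \<Rightarrow> bool" where
  "LMI nx nu m mw P F i B K D W Ab Bb db Kb bb Dh Wh \<longleftrightarrow>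
   (let Pi = row_mat P i;
        BPb = transpose_mat Bb * transpose_mat Pi;
        BP = transpose_mat B * transpose_mat Pi;
        X44 = scal_mat (2 * bb $ i) + Lop BP (1\<^sub>m nu) BPb (1\<^sub>m nu);
        X55 = Lop F (minv W) F Wh;
        X66 = Lop P (minv D) P Dh + Lop K (1\<^sub>m nu) Kb (1\<^sub>m nu)
    in pos_def (block_mat
    [[1\<^sub>m nu, 0\<^sub>m nu m, 0\<^sub>m nu mw, - BPb, 0\<^sub>m nu nx, Kb],
     [0\<^sub>m m nu, Dh, 0\<^sub>m m mw, col_of bb, 0\<^sub>m m nx, 0\<^sub>m m nx],
     [0\<^sub>m mw nu, 0\<^sub>m mw m, Wh, col_of db, 0\<^sub>m mw nx, 0\<^sub>m mw nx],
     [transpose_mat (- BPb), transpose_mat (col_of bb), transpose_mat (col_of db), X44, Pi, Pi * Ab],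
     [0\<^sub>m nx nu, 0\<^sub>m nx m, 0\<^sub>m nx mw, transpose_mat Pi, X55, 0\<^sub>m nx nx],
     [transpose_mat Kb, 0\<^sub>m nx m, 0\<^sub>m nx mw, transpose_mat (Pi * Ab), 0\<^sub>m nx nx, X66]]))"

end

theory Submission
  imports Defs
begin

text \<open>
  Each operator of the LMI satisfies, by completing a square,
  \<open>z\<^sup>T L\<^bsup>L,D\<^esup>\<^bsub>Lb,Db\<^esub> z = |Lb z|\<^sup>2 - |Lb z - Db D\<^sup>-\<^sup>1 L z|\<^sup>2\<close>, both norms weighted by
  \<open>Db\<^sup>-\<^sup>1\<close>. Substituting this into the quadratic form of the LMI matrix and completing the
  squares in its first three block components, that form becomes the quadratic form of the
  RPI matrix at the bold variables with weights \<open>Dh\<^sup>-\<^sup>1\<close>, \<open>Wh\<^sup>-\<^sup>1\<close>, plus three squares,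
  minus four nonnegative linearisation gaps. For (b), the first three components can be chosen
  to annihilate the squares, so the RPI form dominates a positive value of the LMI form.
  For (a), all gaps vanish at the data point, so the LMI form is the RPI form plus squares,
  which is positive unless all components vanish.
\<close>

section \<open>Block matrices and block vectors\<close>

definition blocks_carrier_mat :: "'a mat list list \<Rightarrow> nat list \<Rightarrow> nat list \<Rightarrow> bool" where
  "blocks_carrier_mat Xss ns ms \<longleftrightarrow>
     list_all2 (\<lambda>Xs n. list_all2 (\<lambda>X m. X \<in> carrier_mat n m) Xs ms) Xss ns"

definition vconcat :: "'a::zero vec list \<Rightarrow> 'a vec" where
  "vconcat vs = foldr (@\<^sub>v) vs (0\<^sub>v 0)"

lemma vconcat_Nil [simp]: "vconcat [] = 0\<^sub>v 0"
  by (simp add: vconcat_def)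

lemma vconcat_Cons [simp]: "vconcat (v # vs) = v @\<^sub>v vconcat vs"
  by (simp add: vconcat_def)

lemma append_vec_dim0 [simp]: "dim_vec w = 0 \<Longrightarrow> v @\<^sub>v w = v"
  by (intro eq_vecI) auto

lemma scalar_prod_append_dim:
  "dim_vec v1 = dim_vec w1 \<Longrightarrow> dim_vec v2 = dim_vec w2 \<Longrightarrow>
     (v1 @\<^sub>v v2) \<bullet> (w1 @\<^sub>v w2) = v1 \<bullet> w1 + v2 \<bullet> w2"
  by (rule scalar_prod_append[of v1 "dim_vec v1" v2 "dim_vec v2"])
    (auto intro: carrier_vecI)

lemma vconcat_carrier:
  "list_all2 (\<lambda>v n. v \<in> carrier_vec n) vs ns \<Longrightarrow> vconcat vs \<in> carrier_vec (sum_list ns)"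
  by (induction rule: list_all2_induct) auto

lemma carrier_vec_sum_list_vconcatE:
  assumes "v \<in> carrier_vec (sum_list ns)"
  obtains vs where "list_all2 (\<lambda>v n. v \<in> carrier_vec n) vs ns" "v = vconcat vs"
  using assms
proof (induction ns arbitrary: v thesis)
  case Nil
  have "v = vconcat []" using Nil.prems(2) by (intro eq_vecI) auto
  then show ?case using Nil.prems(1)[of "[]"] by blast
next
  case (Cons n ns)
  obtain vs where "list_all2 (\<lambda>v n. v \<in> carrier_vec n) vs ns"
      "vec_last v (sum_list ns) = vconcat vs"
    using Cons.IH[OF _ vec_last_carrier] by blast
  then show ?case
    using Cons.prems vec_first_last_append[of v n "sum_list ns"]
    by (intro Cons.prems(1)[of "vec_first v n # vs"]) auto
qed

lemma vconcat_eq_zero_iff: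
  assumes "list_all2 (\<lambda>v n. v \<in> carrier_vec n) vs ns"
  shows "vconcat vs = 0\<^sub>v (sum_list ns) \<longleftrightarrow> list_all2 (\<lambda>v n. v = 0\<^sub>v n) vs ns"
  using assms
proof (induction rule: list_all2_induct)
  case (Cons v vs n ns)
  have "0\<^sub>v (n + sum_list ns) = (0\<^sub>v n :: 'a vec) @\<^sub>v 0\<^sub>v (sum_list ns)"
    by (intro eq_vecI) auto
  with Cons show ?case by simp
qed simp

lemma hcat_Cons:
  "Xs \<noteq> [] \<Longrightarrow> hcat (X # Xs) =
     four_block_mat X (hcat Xs) (0\<^sub>m 0 (dim_col X)) (0\<^sub>m 0 (dim_col (hcat Xs)))"
  by (cases Xs) auto

lemma vcat_Cons:
  "Xs \<noteq> [] \<Longrightarrow> vcat (X # Xs) =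
     four_block_mat X (0\<^sub>m (dim_row X) 0) (vcat Xs) (0\<^sub>m (dim_row (vcat Xs)) 0)"
  by (cases Xs) auto

lemma hcat_carrier:
  "list_all2 (\<lambda>X m. X \<in> carrier_mat n m) Xs ms \<Longrightarrow> Xs \<noteq> [] \<Longrightarrow>
     hcat Xs \<in> carrier_mat n (sum_list ms)"
proof (induction rule: list_all2_induct)
  case (Cons X Xs m ms)
  then show ?case
    by (cases "Xs = []") (auto simp: hcat_Cons intro!: four_block_carrier_mat)
qed simp

lemma vcat_carrier:
  "list_all2 (\<lambda>X n. X \<in> carrier_mat n m) Xs ns \<Longrightarrow> Xs \<noteq> [] \<Longrightarrow>
     vcat Xs \<in> carrier_mat (sum_list ns) m"
proof (induction rule: list_all2_induct)
  case (Cons X Xs n ns)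
  then show ?case
    by (cases "Xs = []") (auto simp: vcat_Cons intro!: four_block_carrier_mat)
qed simp

lemma block_mat_carrier:
  fixes Xss :: "'a::zero mat list list"
  assumes "blocks_carrier_mat Xss ns ms" "ns \<noteq> []" "ms \<noteq> []"
  shows "block_mat Xss \<in> carrier_mat (sum_list ns) (sum_list ms)"
proof -
  have "list_all2 (\<lambda>X n. X \<in> carrier_mat n (sum_list ms)) (map hcat Xss) ns"
    unfolding list.rel_map
  proof (rule list_all2_mono[OF assms(1)[unfolded blocks_carrier_mat_def]])
    fix Xs :: "'a mat list" and n assume "list_all2 (\<lambda>X m. X \<in> carrier_mat n m) Xs ms"
    moreover then have "Xs \<noteq> []" using assms(3) by auto
    ultimately show "hcat Xs \<in> carrier_mat n (sum_list ms)" by (rule hcat_carrier)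
  qed
  moreover have "map hcat Xss \<noteq> []" using assms(1,2) by (auto simp: blocks_carrier_mat_def)
  ultimately show ?thesis unfolding block_mat_def by (rule vcat_carrier)
qed

lemma scalar_prod_hcat_mult_vconcat:
  fixes u :: "'a::comm_ring vec"
  assumes "u \<in> carrier_vec n" "list_all2 (\<lambda>X v. X \<in> carrier_mat n (dim_vec v)) Xs vs" "Xs \<noteq> []"
  shows "u \<bullet> (hcat Xs *\<^sub>v vconcat vs) = sum_list (map2 (\<lambda>X v. u \<bullet> (X *\<^sub>v v)) Xs vs)"
  using assms(2,3)
proof (induction rule: list_all2_induct)
  case (Cons X Xs v vs)
  show ?case
  proof (cases "Xs = []")
    case False
    have H: "hcat Xs \<in> carrier_mat n (dim_vec (vconcat vs))"
      using hcat_carrier[of n Xs "map dim_vec vs"] vconcat_carrier[of vs "map dim_vec vs"] Cons False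
      by (auto simp: list.rel_map list_all2_same elim: list_all2_mono)
    have "hcat (X # Xs) *\<^sub>v vconcat (v # vs) = (X *\<^sub>v v + hcat Xs *\<^sub>v vconcat vs) @\<^sub>v
        (0\<^sub>m 0 (dim_col X) *\<^sub>v v + 0\<^sub>m 0 (dim_col (hcat Xs)) *\<^sub>v vconcat vs)"
      unfolding hcat_Cons[OF False] vconcat_Cons using Cons.hyps(1) H
      by (intro four_block_mat_mult_vec) auto
    also have "\<dots> = X *\<^sub>v v + hcat Xs *\<^sub>v vconcat vs"
      by simp
    finally show ?thesis
      using Cons False assms(1) H by (simp add: scalar_prod_add_distrib[of u n])
  qed (use Cons in simp)
qed simp

lemma scalar_prod_vconcat_vcat_mult:
  fixes v :: "'a::comm_ring vec"
  assumes "v \<in> carrier_vec m" "list_all2 (\<lambda>X u. X \<in> carrier_mat (dim_vec u) m) Xs us" "Xs \<noteq> []"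
  shows "vconcat us \<bullet> (vcat Xs *\<^sub>v v) = sum_list (map2 (\<lambda>X u. u \<bullet> (X *\<^sub>v v)) Xs us)"
  using assms(2,3)
proof (induction rule: list_all2_induct)
  case (Cons X Xs u us)
  show ?case
  proof (cases "Xs = []")
    case False
    have V: "vcat Xs \<in> carrier_mat (dim_vec (vconcat us)) m"
      using vcat_carrier[of m Xs "map dim_vec us"] vconcat_carrier[of us "map dim_vec us"] Cons False
      by (auto simp: list.rel_map list_all2_same elim: list_all2_mono)
    have "vcat (X # Xs) *\<^sub>v (v @\<^sub>v 0\<^sub>v 0) = (X *\<^sub>v v + 0\<^sub>m (dim_row X) 0 *\<^sub>v 0\<^sub>v 0) @\<^sub>v
        (vcat Xs *\<^sub>v v + 0\<^sub>m (dim_row (vcat Xs)) 0 *\<^sub>v 0\<^sub>v 0)"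
      unfolding vcat_Cons[OF False] using Cons.hyps(1) V assms(1)
      by (intro four_block_mat_mult_vec) auto
    also have "\<dots> = (X *\<^sub>v v) @\<^sub>v (vcat Xs *\<^sub>v v)"
      using Cons.hyps(1) V assms(1) by (intro arg_cong2[of _ _ _ _ "(@\<^sub>v)"] eq_vecI) auto
    finally show ?thesis
      using Cons False assms(1) V by (simp add: scalar_prod_append_dim)
  qed (use Cons in simp)
qed simp


lemma map2_cong_list_all2:
  "list_all2 P xs ys \<Longrightarrow> (\<And>x y. P x y \<Longrightarrow> f x y = g x y) \<Longrightarrow> map2 f xs ys = map2 g xs ys"
  by (induction rule: list_all2_induct) auto

lemma scalar_prod_block_mat_mult_vconcat:
  fixes Xss :: "'a::comm_ring mat list list"
  assumes Xss: "blocks_carrier_mat Xss ns ms" "ns \<noteq> []" "ms \<noteq> []"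
    and us: "list_all2 (\<lambda>u n. u \<in> carrier_vec n) us ns"
    and vs: "list_all2 (\<lambda>v m. v \<in> carrier_vec m) vs ms"
  shows "vconcat us \<bullet> (block_mat Xss *\<^sub>v vconcat vs) =
    sum_list (map2 (\<lambda>Xs u. sum_list (map2 (\<lambda>X v. u \<bullet> (X *\<^sub>v v)) Xs vs)) Xss us)"
proof -
  have rows: "list_all2 (\<lambda>Xs u.
      list_all2 (\<lambda>X v. X \<in> carrier_mat (dim_vec u) (dim_vec v)) Xs vs \<and> Xs \<noteq> []) Xss us"
    using Xss(1,3) us vs by (fastforce simp: blocks_carrier_mat_def list_all2_conv_all_nth)
  have V: "vconcat vs \<in> carrier_vec (sum_list ms)" using vs by (rule vconcat_carrier)
  have "vconcat us \<bullet> (block_mat Xss *\<^sub>v vconcat vs) =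
      sum_list (map2 (\<lambda>X u. u \<bullet> (X *\<^sub>v vconcat vs)) (map hcat Xss) us)"
    unfolding block_mat_def
  proof (rule scalar_prod_vconcat_vcat_mult[OF V])
    show "list_all2 (\<lambda>X u. X \<in> carrier_mat (dim_vec u) (sum_list ms)) (map hcat Xss) us"
      using Xss(1,3) us
      by (auto simp: blocks_carrier_mat_def list.rel_map list_all2_conv_all_nth
          intro!: hcat_carrier)
  qed (use Xss in \<open>auto simp: blocks_carrier_mat_def\<close>)
  also have "map2 (\<lambda>X u. u \<bullet> (X *\<^sub>v vconcat vs)) (map hcat Xss) us =
      map2 (\<lambda>Xs u. u \<bullet> (hcat Xs *\<^sub>v vconcat vs)) Xss us"
    by (simp add: zip_map1 comp_def case_prod_beta)
  also have "\<dots> = map2 (\<lambda>Xs u. sum_list (map2 (\<lambda>X v. u \<bullet> (X *\<^sub>v v)) Xs vs)) Xss us"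
  proof (rule map2_cong_list_all2[OF rows])
    fix Xs :: "'a mat list" and u :: "'a vec"
    assume "list_all2 (\<lambda>X v. X \<in> carrier_mat (dim_vec u) (dim_vec v)) Xs vs \<and> Xs \<noteq> []"
    then show "u \<bullet> (hcat Xs *\<^sub>v vconcat vs) = sum_list (map2 (\<lambda>X v. u \<bullet> (X *\<^sub>v v)) Xs vs)"
      by (intro scalar_prod_hcat_mult_vconcat[of u "dim_vec u"]) auto
  qed
  finally show ?thesis .
qed

lemma transpose_mat_eqI_bilinear:
  fixes M :: "'a::comm_ring_1 mat"
  assumes M: "M \<in> carrier_mat n n"
    and sym: "\<And>u v. u \<in> carrier_vec n \<Longrightarrow> v \<in> carrier_vec n \<Longrightarrow> u \<bullet> (M *\<^sub>v v) = v \<bullet> (M *\<^sub>v u)"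
  shows "transpose_mat M = M"
proof (rule eq_matI)
  have entry: "unit_vec n a \<bullet> (M *\<^sub>v unit_vec n b) = M $$ (a, b)" if "a < n" "b < n" for a b
    using that M by (simp add: scalar_prod_left_unit[of _ n] scalar_prod_right_unit)
  fix i j assume "i < dim_row M" "j < dim_col M"
  then show "transpose_mat M $$ (i, j) = M $$ (i, j)"
    using entry[of i j] entry[of j i] sym[of "unit_vec n i" "unit_vec n j"] M by auto
qed (use M in auto)

lemma sum_list_map2_conv_sum_nth:
  "length xs = length ys \<Longrightarrow> sum_list (map2 f xs ys) = (\<Sum>i<length xs. f (xs ! i) (ys ! i))"
  by (simp add: sum_list_sum_nth atLeast0LessThan)

lemma transpose_block_mat_eq:
  fixes Xss :: "'a::comm_ring_1 mat list list"
  assumes Xss: "blocks_carrier_mat Xss ns ns" "ns \<noteq> []"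
    and sym: "\<And>i j. i < length ns \<Longrightarrow> j < length ns \<Longrightarrow> Xss ! j ! i = transpose_mat (Xss ! i ! j)"
  shows "transpose_mat (block_mat Xss) = block_mat Xss"
proof (rule transpose_mat_eqI_bilinear[OF block_mat_carrier[OF Xss(1,2,2)]])
  have dims: "length Xss = length ns" "\<And>i. i < length ns \<Longrightarrow> length (Xss ! i) = length ns"
      "\<And>i j. i < length ns \<Longrightarrow> j < length ns \<Longrightarrow> Xss ! i ! j \<in> carrier_mat (ns ! i) (ns ! j)"
    using Xss(1) by (auto simp: blocks_carrier_mat_def list_all2_conv_all_nth)
  have form: "vconcat us \<bullet> (block_mat Xss *\<^sub>v vconcat vs) =
      (\<Sum>i<length ns. \<Sum>j<length ns. us ! i \<bullet> (Xss ! i ! j *\<^sub>v vs ! j))"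
    if "list_all2 (\<lambda>u n. u \<in> carrier_vec n) us ns" "list_all2 (\<lambda>v n. v \<in> carrier_vec n) vs ns"
    for us vs
  proof -
    have len: "length us = length ns" "length vs = length ns"
      using that by (auto dest: list_all2_lengthD)
    have "sum_list (map2 (\<lambda>X v. us ! i \<bullet> (X *\<^sub>v v)) (Xss ! i) vs) =
        (\<Sum>j<length ns. us ! i \<bullet> (Xss ! i ! j *\<^sub>v vs ! j))" if "i < length ns" for i
      using dims(2)[OF that] len by (simp add: sum_list_map2_conv_sum_nth)
    then show ?thesis
      using dims(1) len by (simp add: scalar_prod_block_mat_mult_vconcat[OF Xss(1,2,2) that]
          sum_list_map2_conv_sum_nth)
  qed
  fix u v :: "'a vec" assume u: "u \<in> carrier_vec (sum_list ns)" and v: "v \<in> carrier_vec (sum_list ns)"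
  obtain us where us: "list_all2 (\<lambda>u n. u \<in> carrier_vec n) us ns" "u = vconcat us"
    using carrier_vec_sum_list_vconcatE[OF u] .
  obtain vs where vs: "list_all2 (\<lambda>v n. v \<in> carrier_vec n) vs ns" "v = vconcat vs"
    using carrier_vec_sum_list_vconcatE[OF v] .
  have swap: "us ! i \<bullet> (Xss ! i ! j *\<^sub>v vs ! j) = vs ! j \<bullet> (Xss ! j ! i *\<^sub>v us ! i)"
    if "i < length ns" "j < length ns" for i j
  proof -
    have u: "us ! i \<in> carrier_vec (ns ! i)" and v: "vs ! j \<in> carrier_vec (ns ! j)"
      using that us(1) vs(1) by (auto simp: list_all2_conv_all_nth)
    have "us ! i \<bullet> (Xss ! i ! j *\<^sub>v vs ! j) = (transpose_mat (Xss ! i ! j) *\<^sub>v us ! i) \<bullet> vs ! j"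
      using transpose_vec_mult_scalar[OF dims(3)[OF that] v u] by simp
    also have "\<dots> = vs ! j \<bullet> (Xss ! j ! i *\<^sub>v us ! i)"
      unfolding sym[OF that] using dims(3)[OF that] u v by (intro comm_scalar_prod) auto
    finally show ?thesis .
  qed
  have "u \<bullet> (block_mat Xss *\<^sub>v v) =
      (\<Sum>i<length ns. \<Sum>j<length ns. vs ! j \<bullet> (Xss ! j ! i *\<^sub>v us ! i))"
    unfolding us(2) vs(2) form[OF us(1) vs(1)] by (intro sum.cong refl) (simp add: swap)
  also have "\<dots> = v \<bullet> (block_mat Xss *\<^sub>v u)"
    unfolding us(2) vs(2) form[OF vs(1) us(1)] by (rule sum.swap)
  finally show "u \<bullet> (block_mat Xss *\<^sub>v v) = v \<bullet> (block_mat Xss *\<^sub>v u)" .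
qed

lemma pos_def_vconcatI:
  assumes M: "M \<in> carrier_mat (sum_list ns) (sum_list ns)" "transpose_mat M = M"
    and pos: "\<And>vs. list_all2 (\<lambda>v n. v \<in> carrier_vec n) vs ns \<Longrightarrow>
      \<not> list_all2 (\<lambda>v n. v = 0\<^sub>v n) vs ns \<Longrightarrow> vconcat vs \<bullet> (M *\<^sub>v vconcat vs) > 0"
  shows "pos_def M"
proof -
  have "v \<bullet> (M *\<^sub>v v) > 0" if v: "v \<in> carrier_vec (sum_list ns)" "v \<noteq> 0\<^sub>v (sum_list ns)" for v
  proof -
    obtain vs where vs: "list_all2 (\<lambda>v n. v \<in> carrier_vec n) vs ns" "v = vconcat vs"
      using carrier_vec_sum_list_vconcatE[OF v(1)] .
    then have "\<not> list_all2 (\<lambda>v n. v = 0\<^sub>v n) vs ns"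
      using v(2) vconcat_eq_zero_iff by blast
    then show ?thesis using pos vs by blast
  qed
  then show ?thesis using M unfolding pos_def_def by auto
qed

lemma pos_def_vconcatD:
  assumes "pos_def M" "M \<in> carrier_mat (sum_list ns) (sum_list ns)"
    and vs: "list_all2 (\<lambda>v n. v \<in> carrier_vec n) vs ns" "\<not> list_all2 (\<lambda>v n. v = 0\<^sub>v n) vs ns"
  shows "vconcat vs \<bullet> (M *\<^sub>v vconcat vs) > 0"
proof -
  have "vconcat vs \<in> carrier_vec (sum_list ns)" "vconcat vs \<noteq> 0\<^sub>v (sum_list ns)"
    using vs vconcat_carrier vconcat_eq_zero_iff by blast+
  then show ?thesis using assms(1,2) unfolding pos_def_def by auto
qed

section \<open>Inverses of positive diagonal matrices\<close>

lemma minv_eqI: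
  assumes D: "D \<in> carrier_mat n n" and E: "E \<in> carrier_mat n n"
    and DE: "D * E = 1\<^sub>m n" and ED: "E * D = 1\<^sub>m n"
  shows "minv D = E"
proof -
  have unique: "E' = E" if E': "E' \<in> carrier_mat n n" "E' * D = 1\<^sub>m n" for E'
  proof -
    have "E' = E' * (D * E)" using E' DE by simp
    also have "\<dots> = (E' * D) * E" by (rule assoc_mult_mat[OF E'(1) D E, symmetric])
    finally show ?thesis using E' E by simp
  qed
  have n: "dim_row D = n" using D by simp
  show ?thesis
    unfolding minv_def n
  proof (rule some_equality)
    show "E \<in> carrier_mat n n \<and> D * E = 1\<^sub>m n \<and> E * D = 1\<^sub>m n" using E DE ED by blast
  qed (use unique in blast)
qed

lemma minv_one [simp]: "minv (1\<^sub>m n) = 1\<^sub>m n"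
  by (rule minv_eqI) auto

lemma one_diag_pos: "1\<^sub>m n \<in> diag_pos n"
  by (auto simp: diag_pos_def diagonal_mat_def)

lemma diag_pos_carrier: "D \<in> diag_pos m \<Longrightarrow> D \<in> carrier_mat m m"
  by (simp add: diag_pos_def)

lemma diag_pos_diag: "D \<in> diag_pos m \<Longrightarrow> j < m \<Longrightarrow> D $$ (j, j) > 0"
  by (simp add: diag_pos_def)

lemma diag_pos_off_diag: "D \<in> diag_pos m \<Longrightarrow> i < m \<Longrightarrow> j < m \<Longrightarrow> i \<noteq> j \<Longrightarrow> D $$ (i, j) = 0"
  by (auto simp: diag_pos_def diagonal_mat_def)

lemma transpose_diag_pos:
  assumes D: "D \<in> diag_pos m"
  shows "transpose_mat D = D"
proof -
  have dims: "dim_row D = m" "dim_col D = m" using diag_pos_carrier[OF D] by auto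
  show ?thesis
  proof (rule eq_matI)
    fix i j assume "i < dim_row D" "j < dim_col D"
    then show "transpose_mat D $$ (i, j) = D $$ (i, j)"
      using D dims by (cases "i = j") (simp_all add: diag_pos_off_diag)
  qed (simp_all add: dims)
qed

lemma diag_pos_mult:
  assumes D: "D \<in> diag_pos m" and E: "E \<in> carrier_mat m n"
  shows "D * E = mat m n (\<lambda>(i, j). D $$ (i, i) * E $$ (i, j))"
proof (rule eq_matI)
  fix i j assume ij: "i < dim_row (mat m n (\<lambda>(i, j). D $$ (i, i) * E $$ (i, j)))"
    "j < dim_col (mat m n (\<lambda>(i, j). D $$ (i, i) * E $$ (i, j)))"
  have "(D * E) $$ (i, j) = (\<Sum>k<m. D $$ (i, k) * E $$ (k, j))"
    using ij D E diag_pos_carrier[OF D]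
    by (auto simp: scalar_prod_def lessThan_atLeast0 intro!: sum.cong)
  also have "\<dots> = (\<Sum>k<m. if k = i then D $$ (i, i) * E $$ (i, j) else 0)"
    using ij D by (intro sum.cong) (auto simp: diag_pos_off_diag)
  finally show "(D * E) $$ (i, j) = mat m n (\<lambda>(i, j). D $$ (i, i) * E $$ (i, j)) $$ (i, j)"
    using ij by simp
qed (use assms diag_pos_carrier in auto)

lemma minv_diag_pos:
  assumes D: "D \<in> diag_pos m"
  shows "minv D \<in> diag_pos m" "D * minv D = 1\<^sub>m m" "minv D * D = 1\<^sub>m m"
proof -
  define E where "E = mat m m (\<lambda>(i, j). if i = j then 1 / D $$ (i, i) else (0::real))"
  have nz: "D $$ (j, j) \<noteq> 0" if "j < m" for j using diag_pos_diag[OF D that] by simp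
  have E: "E \<in> diag_pos m" using D by (auto simp: E_def diag_pos_def diagonal_mat_def)
  have DE: "D * E = 1\<^sub>m m"
    unfolding diag_pos_mult[OF D diag_pos_carrier[OF E]]
    by (rule eq_matI) (simp_all add: E_def nz)
  have ED: "E * D = 1\<^sub>m m"
    unfolding diag_pos_mult[OF E diag_pos_carrier[OF D]]
    by (rule eq_matI) (simp_all add: E_def nz diag_pos_off_diag[OF D])
  have "minv D = E"
    using diag_pos_carrier[OF D] diag_pos_carrier[OF E] DE ED by (rule minv_eqI)
  then show "minv D \<in> diag_pos m" "D * minv D = 1\<^sub>m m" "minv D * D = 1\<^sub>m m"
    using E DE ED by simp_all
qed

lemma minv_minv_diag_pos: "D \<in> diag_pos m \<Longrightarrow> minv (minv D) = D"
  by (rule minv_eqI[of _ m]) (simp_all add: minv_diag_pos diag_pos_carrier)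

lemma diag_pos_quadratic_form:
  assumes D: "D \<in> diag_pos m" and x: "x \<in> carrier_vec m"
  shows "x \<bullet> (D *\<^sub>v x) = (\<Sum>j<m. D $$ (j, j) * (x $ j)\<^sup>2)"
proof -
  have "x \<bullet> (D *\<^sub>v x) = (\<Sum>j<m. x $ j * (\<Sum>k<m. D $$ (j, k) * x $ k))"
    using D x by (auto simp: scalar_prod_def diag_pos_def lessThan_atLeast0)
  also have "\<dots> = (\<Sum>j<m. D $$ (j, j) * (x $ j)\<^sup>2)"
  proof (rule sum.cong[OF refl])
    fix j assume j: "j \<in> {..<m}"
    then have "(\<Sum>k<m. D $$ (j, k) * x $ k) = (\<Sum>k<m. if k = j then D $$ (j, j) * x $ j else 0)"
      using D by (intro sum.cong) (auto simp: diag_pos_off_diag)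
    then show "x $ j * (\<Sum>k<m. D $$ (j, k) * x $ k) = D $$ (j, j) * (x $ j)\<^sup>2"
      using j by (simp add: power2_eq_square)
  qed
  finally show ?thesis .
qed

lemma diag_pos_quadratic_form_nonneg:
  assumes D: "D \<in> diag_pos m" and x: "x \<in> carrier_vec m"
  shows "x \<bullet> (D *\<^sub>v x) \<ge> 0"
  unfolding diag_pos_quadratic_form[OF D x]
  using diag_pos_diag[OF D] by (intro sum_nonneg) (simp add: less_imp_le)

lemma diag_pos_quadratic_form_pos:
  assumes D: "D \<in> diag_pos m" and x: "x \<in> carrier_vec m" "x \<noteq> 0\<^sub>v m"
  shows "x \<bullet> (D *\<^sub>v x) > 0"
proof -
  obtain j where j: "j < m" "x $ j \<noteq> 0" using x by (metis carrier_vecD eq_vecI index_zero_vec)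
  show ?thesis
    unfolding diag_pos_quadratic_form[OF D x(1)]
    using diag_pos_diag[OF D] j by (intro sum_pos2[of _ j]) (simp_all add: less_imp_le)
qed

lemma mult_mat_vec_assoc_dim [simp]:
  "dim_col A = dim_row B \<Longrightarrow> dim_vec v = dim_col B \<Longrightarrow> ((A :: real mat) * B) *\<^sub>v v = A *\<^sub>v (B *\<^sub>v v)"
  by (rule assoc_mult_mat_vec[of _ "dim_row A" "dim_col A" _ "dim_col B"]) (auto intro: carrier_matI carrier_vecI)

lemma add_mult_mat_vec_dim [simp]:
  "dim_row B = dim_row A \<Longrightarrow> dim_col B = dim_col A \<Longrightarrow> dim_vec v = dim_col A \<Longrightarrow>
     ((A :: real mat) + B) *\<^sub>v v = A *\<^sub>v v + B *\<^sub>v v"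
  by (rule add_mult_distrib_mat_vec[of _ "dim_row A" "dim_col A"]) (auto intro: carrier_matI carrier_vecI)

lemma minus_mult_mat_vec_dim [simp]:
  "dim_row B = dim_row A \<Longrightarrow> dim_col B = dim_col A \<Longrightarrow> dim_vec v = dim_col A \<Longrightarrow>
     ((A :: real mat) - B) *\<^sub>v v = A *\<^sub>v v - B *\<^sub>v v"
  by (rule minus_mult_distrib_mat_vec[of _ "dim_row A" "dim_col A"]) (auto intro: carrier_matI carrier_vecI)

lemma mult_mat_vec_add_dim [simp]:
  "dim_vec v = dim_col A \<Longrightarrow> dim_vec w = dim_col A \<Longrightarrow> (A :: real mat) *\<^sub>v (v + w) = A *\<^sub>v v + A *\<^sub>v w"
  by (rule mult_add_distrib_mat_vec[of _ "dim_row A" "dim_col A"]) (auto intro: carrier_matI carrier_vecI)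

lemma mult_mat_vec_minus_dim [simp]:
  "dim_vec v = dim_col A \<Longrightarrow> dim_vec w = dim_col A \<Longrightarrow> (A :: real mat) *\<^sub>v (v - w) = A *\<^sub>v v - A *\<^sub>v w"
  by (rule mult_minus_distrib_mat_vec[of _ "dim_row A" "dim_col A"]) (auto intro: carrier_matI carrier_vecI)

lemma mult_mat_vec_smult_dim [simp]:
  "dim_vec v = dim_col A \<Longrightarrow> (A :: real mat) *\<^sub>v (k \<cdot>\<^sub>v v) = k \<cdot>\<^sub>v (A *\<^sub>v v)"
  by (rule mult_mat_vec[of _ "dim_row A" "dim_col A"]) (auto intro: carrier_matI carrier_vecI)

lemma add_scalar_prod_dim [simp]:
  "dim_vec v = dim_vec u \<Longrightarrow> dim_vec w = dim_vec u \<Longrightarrow> (v + w) \<bullet> (u :: real vec) = v \<bullet> u + w \<bullet> u"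
  by (rule add_scalar_prod_distrib[of _ "dim_vec u"]) (auto intro: carrier_vecI)

lemma minus_scalar_prod_dim [simp]:
  "dim_vec v = dim_vec u \<Longrightarrow> dim_vec w = dim_vec u \<Longrightarrow> (v - w) \<bullet> (u :: real vec) = v \<bullet> u - w \<bullet> u"
  by (rule minus_scalar_prod_distrib[of _ "dim_vec u"]) (auto intro: carrier_vecI)

lemma scalar_prod_add_dim [simp]:
  "dim_vec v = dim_vec u \<Longrightarrow> dim_vec w = dim_vec u \<Longrightarrow> (u :: real vec) \<bullet> (v + w) = u \<bullet> v + u \<bullet> w"
  by (rule scalar_prod_add_distrib[of _ "dim_vec u"]) (auto intro: carrier_vecI)

lemma scalar_prod_minus_dim [simp]:
  "dim_vec v = dim_vec u \<Longrightarrow> dim_vec w = dim_vec u \<Longrightarrow> (u :: real vec) \<bullet> (v - w) = u \<bullet> v - u \<bullet> w"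
  by (rule scalar_prod_minus_distrib[of _ "dim_vec u"]) (auto intro: carrier_vecI)

lemma scalar_prod_comm_dim: "dim_vec v = dim_vec w \<Longrightarrow> (v :: real vec) \<bullet> w = w \<bullet> v"
  by (rule comm_scalar_prod[of _ "dim_vec v"]) (auto intro: carrier_vecI)

lemma scalar_prod_transpose_dim [simp]:
  "dim_vec z = dim_col A \<Longrightarrow> dim_vec w = dim_row A \<Longrightarrow>
     z \<bullet> (transpose_mat (A :: real mat) *\<^sub>v w) = (A *\<^sub>v z) \<bullet> w"
  using transpose_vec_mult_scalar[of A "dim_row A" "dim_col A" z w]
    scalar_prod_comm_dim[of z "transpose_mat A *\<^sub>v w"] scalar_prod_comm_dim[of w "A *\<^sub>v z"]
  by (auto intro: carrier_matI carrier_vecI)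

lemma transpose_scalar_prod_dim [simp]:
  "dim_vec z = dim_col A \<Longrightarrow> dim_vec w = dim_row A \<Longrightarrow>
     (transpose_mat (A :: real mat) *\<^sub>v w) \<bullet> z = (A *\<^sub>v z) \<bullet> w"
  using scalar_prod_transpose_dim[of z A w] scalar_prod_comm_dim[of z "transpose_mat A *\<^sub>v w"] by simp

lemma symmetric_scalar_prod_mult_vec:
  "transpose_mat E = E \<Longrightarrow> E \<in> carrier_mat n n \<Longrightarrow> u \<in> carrier_vec n \<Longrightarrow> v \<in> carrier_vec n \<Longrightarrow>
     u \<bullet> ((E :: real mat) *\<^sub>v v) = v \<bullet> (E *\<^sub>v u)"
  using scalar_prod_transpose_dim[of u E v] scalar_prod_comm_dim[of v "E *\<^sub>v u"] by simp

lemma zero_mat_mult_vec_dim [simp]: "dim_vec v = n \<Longrightarrow> 0\<^sub>m m n *\<^sub>v v = (0\<^sub>v m :: real vec)"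
  by (intro eq_vecI) (auto simp: scalar_prod_def)

lemma mult_mat_vec_zero_dim [simp]: "dim_col A = n \<Longrightarrow> (A :: real mat) *\<^sub>v 0\<^sub>v n = 0\<^sub>v (dim_row A)"
  by (intro eq_vecI) (auto simp: scalar_prod_def)

lemma zero_scalar_prod_dim [simp]: "dim_vec v = n \<Longrightarrow> 0\<^sub>v n \<bullet> (v :: real vec) = 0"
  by (simp add: scalar_prod_def)

lemma scalar_prod_self_nonneg: "(v :: real vec) \<bullet> v \<ge> 0"
  by (simp add: scalar_prod_def sum_nonneg)

section \<open>The linearisation operator\<close>

lemma Lop_dims [simp]: "dim_row (Lop L D Lb Db) = dim_col L" "dim_col (Lop L D Lb Db) = dim_col L"
  by (simp_all add: Lop_def)

lemma quadratic_form_Lop: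
  assumes L: "L \<in> carrier_mat r n" "Lb \<in> carrier_mat r n"
    and Db: "Db \<in> carrier_mat r r" "Dbi \<in> carrier_mat r r" "Dbi * Db = 1\<^sub>m r" "transpose_mat Dbi = Dbi"
    and E: "minv D \<in> carrier_mat r r" "transpose_mat (minv D) = minv D"
    and z: "z \<in> carrier_vec n"
  shows "z \<bullet> (Lop L D Lb Db *\<^sub>v z) = (Lb *\<^sub>v z) \<bullet> (Dbi *\<^sub>v (Lb *\<^sub>v z))
    - (Lb *\<^sub>v z - Db *\<^sub>v (minv D *\<^sub>v (L *\<^sub>v z))) \<bullet> (Dbi *\<^sub>v (Lb *\<^sub>v z - Db *\<^sub>v (minv D *\<^sub>v (L *\<^sub>v z))))"
proof -
  define a where "a = Lb *\<^sub>v z"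
  define w where "w = minv D *\<^sub>v (L *\<^sub>v z)"
  have a: "a \<in> carrier_vec r" and w: "w \<in> carrier_vec r" using L E z by (auto simp: a_def w_def)
  have "z \<bullet> (Lop L D Lb Db *\<^sub>v z) = a \<bullet> w + (L *\<^sub>v z) \<bullet> (minv D *\<^sub>v a) - (L *\<^sub>v z) \<bullet> (minv D *\<^sub>v (Db *\<^sub>v w))"
    using L Db E z by (simp add: Lop_def a_def w_def)
  also have "(L *\<^sub>v z) \<bullet> (minv D *\<^sub>v a) = a \<bullet> w"
    unfolding w_def using L E z a by (intro symmetric_scalar_prod_mult_vec) auto
  also have "(L *\<^sub>v z) \<bullet> (minv D *\<^sub>v (Db *\<^sub>v w)) = (Db *\<^sub>v w) \<bullet> w"
    unfolding w_def using L Db E z by (intro symmetric_scalar_prod_mult_vec) auto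
  finally have Lop: "z \<bullet> (Lop L D Lb Db *\<^sub>v z) = 2 * (a \<bullet> w) - (Db *\<^sub>v w) \<bullet> w" by simp
  have "Dbi *\<^sub>v (Db *\<^sub>v w) = w"
    using Db w by (simp flip: mult_mat_vec_assoc_dim)
  moreover have "(Db *\<^sub>v w) \<bullet> (Dbi *\<^sub>v a) = a \<bullet> (Dbi *\<^sub>v (Db *\<^sub>v w))"
    using Db a w by (intro symmetric_scalar_prod_mult_vec) auto
  ultimately have "(a - Db *\<^sub>v w) \<bullet> (Dbi *\<^sub>v (a - Db *\<^sub>v w)) = a \<bullet> (Dbi *\<^sub>v a) - 2 * (a \<bullet> w) + (Db *\<^sub>v w) \<bullet> w"
    using Db a w by simp
  then show ?thesis unfolding Lop by (simp add: a_def w_def)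
qed

lemma transpose_sandwich:
  assumes "A \<in> carrier_mat r n" "C \<in> carrier_mat r n" "E \<in> carrier_mat r r" "transpose_mat E = E"
  shows "transpose_mat (transpose_mat A * E * C) = transpose_mat C * E * (A :: real mat)"
proof -
  have "transpose_mat (transpose_mat A * E * C) = transpose_mat C * transpose_mat (transpose_mat A * E)"
    using assms by (intro transpose_mult[of _ n r]) auto
  also have "transpose_mat (transpose_mat A * E) = E * A"
    using assms transpose_mult[of "transpose_mat A" n r E r] by simp
  finally show ?thesis
    using assms by (simp add: assoc_mult_mat[of "transpose_mat C" n r E r A n])
qed

lemma transpose_Lop:
  assumes L: "L \<in> carrier_mat r n" "Lb \<in> carrier_mat r n" and Db: "Db \<in> carrier_mat r r" "transpose_mat Db = Db"
    and E: "minv D \<in> carrier_mat r r" "transpose_mat (minv D) = minv D"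
  shows "transpose_mat (Lop L D Lb Db) = Lop L D Lb Db"
proof -
  define G where "G = minv D * Db * minv D"
  have G: "G \<in> carrier_mat r r" "transpose_mat G = G"
    unfolding G_def using Db E transpose_mult[of "minv D * Db" r r "minv D" r]
      transpose_mult[of "minv D" r r Db r] assoc_mult_mat[of "minv D" r r Db r "minv D" r]
    by simp_all
  have "transpose_mat L * minv D * Db * minv D * L = transpose_mat L * G * L"
    unfolding G_def using L Db E by (simp add: assoc_mult_mat[of _ n r _ r])
  then show ?thesis
    unfolding Lop_def
    using transpose_sandwich[OF L(2,1) E] transpose_sandwich[OF L(1,2) E] transpose_sandwich[OF L(1,1) G] L E G
    by (simp add: transpose_minus[of _ n n] transpose_add[of _ n n] comm_add_mat[of _ n n])
qed

lemma quadratic_form_Lop_one: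
  assumes "L \<in> carrier_mat r n" "Lb \<in> carrier_mat r n" "z \<in> carrier_vec n"
  shows "z \<bullet> (Lop L (1\<^sub>m r) Lb (1\<^sub>m r) *\<^sub>v z)
    = (Lb *\<^sub>v z) \<bullet> (Lb *\<^sub>v z) - (Lb *\<^sub>v z - L *\<^sub>v z) \<bullet> (Lb *\<^sub>v z - L *\<^sub>v z)"
  using quadratic_form_Lop[of L r n Lb "1\<^sub>m r" "1\<^sub>m r" "1\<^sub>m r" z] assms by simp

lemma quadratic_form_Lop_diag_pos:
  assumes "L \<in> carrier_mat r n" "D \<in> diag_pos r" "Dh \<in> diag_pos r" "z \<in> carrier_vec n"
  shows "z \<bullet> (Lop L (minv D) L Dh *\<^sub>v z) = (L *\<^sub>v z) \<bullet> (minv Dh *\<^sub>v (L *\<^sub>v z))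
    - (L *\<^sub>v z - Dh *\<^sub>v (D *\<^sub>v (L *\<^sub>v z))) \<bullet> (minv Dh *\<^sub>v (L *\<^sub>v z - Dh *\<^sub>v (D *\<^sub>v (L *\<^sub>v z))))"
  using quadratic_form_Lop[of L r n L Dh "minv Dh" "minv D" z] assms
  by (simp add: minv_minv_diag_pos minv_diag_pos diag_pos_carrier transpose_diag_pos
      transpose_diag_pos[OF minv_diag_pos(1)[OF assms(3)]])

lemma diag_pos_quadratic_form_shift:
  assumes D: "D \<in> diag_pos m" and x: "x \<in> carrier_vec m" and c: "c \<in> carrier_vec m"
  shows "(x + t \<cdot>\<^sub>v (minv D *\<^sub>v c)) \<bullet> (D *\<^sub>v (x + t \<cdot>\<^sub>v (minv D *\<^sub>v c)))
    = x \<bullet> (D *\<^sub>v x) + 2 * t * (x \<bullet> c) + t * t * (c \<bullet> (minv D *\<^sub>v c))"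
proof -
  have Di: "minv D \<in> carrier_mat m m" "D * minv D = 1\<^sub>m m" "transpose_mat (minv D) = minv D"
    using minv_diag_pos[OF D] by (simp_all add: diag_pos_carrier transpose_diag_pos)
  have Dc: "D \<in> carrier_mat m m" "transpose_mat D = D"
    using D by (simp_all add: diag_pos_carrier transpose_diag_pos)
  have DDi: "D *\<^sub>v (minv D *\<^sub>v c) = c"
    using Di Dc c by (simp flip: mult_mat_vec_assoc_dim)
  have "(minv D *\<^sub>v c) \<bullet> (D *\<^sub>v x) = x \<bullet> c"
    using symmetric_scalar_prod_mult_vec[OF Dc(2,1), of "minv D *\<^sub>v c" x] DDi Di x c
    by (simp add: scalar_prod_comm_dim[of x c])
  moreover have "(minv D *\<^sub>v c) \<bullet> c = c \<bullet> (minv D *\<^sub>v c)"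
    using Di c by (simp add: scalar_prod_comm_dim)
  ultimately show ?thesis
    using Di Dc x c DDi by (simp add: algebra_simps)
qed

section \<open>The matrices of the RPI condition and of the LMI\<close>

lemma mat_of_row_mult_vec [simp]: "dim_vec v = dim_vec r \<Longrightarrow> mat_of_row r *\<^sub>v v = vec 1 (\<lambda>_. r \<bullet> v)"
  by (intro eq_vecI) auto

lemma transpose_mat_of_row_mult_vec [simp]:
  "dim_vec y = Suc 0 \<Longrightarrow> transpose_mat (mat_of_row v) *\<^sub>v y = y $ 0 \<cdot>\<^sub>v (v :: real vec)"
  by (intro eq_vecI) (auto simp: scalar_prod_def)

lemma scalar_prod_vec_1 [simp]:
  "dim_vec y = Suc 0 \<Longrightarrow> vec (Suc 0) (\<lambda>_. c) \<bullet> y = c * y $ 0"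
  "dim_vec y = Suc 0 \<Longrightarrow> y \<bullet> vec (Suc 0) (\<lambda>_. c) = y $ 0 * c"
  by (auto simp: scalar_prod_def)

lemma scal_mat_mult_vec [simp]: "dim_vec y = Suc 0 \<Longrightarrow> scal_mat c *\<^sub>v y = c \<cdot>\<^sub>v y"
  by (intro eq_vecI) (auto simp: scal_mat_def scalar_prod_def row_def)

lemma scalar_prod_self_dim_1: "dim_vec y = Suc 0 \<Longrightarrow> y \<bullet> (y :: real vec) = y $ 0 * y $ 0"
  by (auto simp: scalar_prod_def)

lemma dims_col_of [simp]: "dim_row (col_of v) = dim_vec v" "dim_col (col_of v) = 1"
  by (simp_all add: col_of_def)

lemma dims_row_mat [simp]: "dim_row (row_mat P i) = 1" "dim_col (row_mat P i) = dim_col P"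
  by (simp_all add: row_mat_def)

lemma dims_scal_mat [simp]: "dim_row (scal_mat c) = 1" "dim_col (scal_mat c) = 1"
  by (simp_all add: scal_mat_def)

lemma transpose_mat_1x1: "X \<in> carrier_mat 1 1 \<Longrightarrow> transpose_mat X = X"
  by (intro eq_matI) auto

definition rpi_blocks :: "nat \<Rightarrow> real mat \<Rightarrow> real mat \<Rightarrow> nat \<Rightarrow> real mat \<Rightarrow> real mat \<Rightarrow> real mat
    \<Rightarrow> real vec \<Rightarrow> real vec \<Rightarrow> real mat \<Rightarrow> real mat \<Rightarrow> real mat list list" where
  "rpi_blocks nx P F i A B K b d D W =
    [[scal_mat (2 * b $ i) - transpose_mat (col_of b) * D * col_of b
        - transpose_mat (col_of d) * W * col_of d,
      row_mat P i, row_mat P i * (A + B * K)],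
     [transpose_mat (row_mat P i), transpose_mat F * W * F, 0\<^sub>m nx nx],
     [transpose_mat (row_mat P i * (A + B * K)), 0\<^sub>m nx nx, transpose_mat P * D * P]]"

lemma RPI_iff_pos_def: "RPI nx P F i A B K b d D W \<longleftrightarrow> pos_def (block_mat (rpi_blocks nx P F i A B K b d D W))"
  unfolding RPI_def rpi_blocks_def ..

definition lmi_blocks :: "nat \<Rightarrow> nat \<Rightarrow> nat \<Rightarrow> nat \<Rightarrow> real mat \<Rightarrow> real mat \<Rightarrow> nat
    \<Rightarrow> real mat \<Rightarrow> real mat \<Rightarrow> real mat \<Rightarrow> real mat \<Rightarrow> real mat \<Rightarrow> real mat \<Rightarrow> real vec \<Rightarrow> real mat
    \<Rightarrow> real vec \<Rightarrow> real mat \<Rightarrow> real mat \<Rightarrow> real mat list list" where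
  "lmi_blocks nx nu m mw P F i B K D W Ab Bb db Kb bb Dh Wh =
   (let Pi = row_mat P i;
        BPb = transpose_mat Bb * transpose_mat Pi;
        BP = transpose_mat B * transpose_mat Pi
    in [[1\<^sub>m nu, 0\<^sub>m nu m, 0\<^sub>m nu mw, - BPb, 0\<^sub>m nu nx, Kb],
        [0\<^sub>m m nu, Dh, 0\<^sub>m m mw, col_of bb, 0\<^sub>m m nx, 0\<^sub>m m nx],
        [0\<^sub>m mw nu, 0\<^sub>m mw m, Wh, col_of db, 0\<^sub>m mw nx, 0\<^sub>m mw nx],
        [transpose_mat (- BPb), transpose_mat (col_of bb), transpose_mat (col_of db),
          scal_mat (2 * bb $ i) + Lop BP (1\<^sub>m nu) BPb (1\<^sub>m nu), Pi, Pi * Ab],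
        [0\<^sub>m nx nu, 0\<^sub>m nx m, 0\<^sub>m nx mw, transpose_mat Pi, Lop F (minv W) F Wh, 0\<^sub>m nx nx],
        [transpose_mat Kb, 0\<^sub>m nx m, 0\<^sub>m nx mw, transpose_mat (Pi * Ab), 0\<^sub>m nx nx,
          Lop P (minv D) P Dh + Lop K (1\<^sub>m nu) Kb (1\<^sub>m nu)]])"

lemma LMI_iff_pos_def:
  "LMI nx nu m mw P F i B K D W Ab Bb db Kb bb Dh Wh \<longleftrightarrow>
     pos_def (block_mat (lmi_blocks nx nu m mw P F i B K D W Ab Bb db Kb bb Dh Wh))"
  unfolding LMI_def lmi_blocks_def Let_def ..

lemma rpi_blocks_carrier:
  assumes "P \<in> carrier_mat m nx" "F \<in> carrier_mat mw nx" "i < m"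
    and "A \<in> carrier_mat nx nx" "B \<in> carrier_mat nx nu" "K \<in> carrier_mat nu nx"
    and "b \<in> carrier_vec m" "d \<in> carrier_vec mw" "D \<in> carrier_mat m m" "W \<in> carrier_mat mw mw"
  shows "blocks_carrier_mat (rpi_blocks nx P F i A B K b d D W) [1, nx, nx] [1, nx, nx]"
  using assms by (auto simp: rpi_blocks_def blocks_carrier_mat_def intro!: carrier_matI)

lemma lmi_blocks_carrier:
  assumes "P \<in> carrier_mat m nx" "F \<in> carrier_mat mw nx" "i < m"
    and "B \<in> carrier_mat nx nu" "K \<in> carrier_mat nu nx"
    and "Ab \<in> carrier_mat nx nx" "Bb \<in> carrier_mat nx nu" "Kb \<in> carrier_mat nu nx"
    and "bb \<in> carrier_vec m" "db \<in> carrier_vec mw" "Dh \<in> carrier_mat m m" "Wh \<in> carrier_mat mw mw"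
  shows "blocks_carrier_mat (lmi_blocks nx nu m mw P F i B K D W Ab Bb db Kb bb Dh Wh)
    [nu, m, mw, 1, nx, nx] [nu, m, mw, 1, nx, nx]"
  using assms by (auto simp: lmi_blocks_def Let_def blocks_carrier_mat_def intro!: carrier_matI)

lemma rpi_quadratic_form:
  assumes P: "P \<in> carrier_mat m nx" and F: "F \<in> carrier_mat mw nx" and i: "i < m"
    and A: "A \<in> carrier_mat nx nx" and B: "B \<in> carrier_mat nx nu" and K: "K \<in> carrier_mat nu nx"
    and b: "b \<in> carrier_vec m" and d: "d \<in> carrier_vec mw"
    and D: "D \<in> carrier_mat m m" and W: "W \<in> carrier_mat mw mw"
    and y: "y \<in> carrier_vec 1" and z: "z1 \<in> carrier_vec nx" "z2 \<in> carrier_vec nx"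
  shows "vconcat [y, z1, z2] \<bullet> (block_mat (rpi_blocks nx P F i A B K b d D W) *\<^sub>v vconcat [y, z1, z2])
    = 2 * b $ i * (y $ 0)\<^sup>2 - (y $ 0)\<^sup>2 * (b \<bullet> (D *\<^sub>v b)) - (y $ 0)\<^sup>2 * (d \<bullet> (W *\<^sub>v d))
      + 2 * y $ 0 * (row P i \<bullet> z1) + 2 * y $ 0 * (row P i \<bullet> (A *\<^sub>v z2))
      + 2 * y $ 0 * (row P i \<bullet> (B *\<^sub>v (K *\<^sub>v z2)))
      + (F *\<^sub>v z1) \<bullet> (W *\<^sub>v (F *\<^sub>v z1)) + (P *\<^sub>v z2) \<bullet> (D *\<^sub>v (P *\<^sub>v z2))"
proof -
  have r: "row P i \<in> carrier_vec nx" using P i by simp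
  have ns: "[1, nx, nx] \<noteq> []" and vs: "list_all2 (\<lambda>v n. v \<in> carrier_vec n) [y, z1, z2] [1, nx, nx]"
    using y z by simp_all
  show ?thesis
    unfolding scalar_prod_block_mat_mult_vconcat[OF rpi_blocks_carrier[OF assms(1-10)] ns ns vs vs]
    using assms r
    by (simp add: rpi_blocks_def row_mat_def col_of_def scalar_prod_self_dim_1
        scalar_prod_comm_dim[of z1 "row P i"] power2_eq_square algebra_simps)
qed

lemma lmi_quadratic_form:
  assumes P: "P \<in> carrier_mat m nx" and F: "F \<in> carrier_mat mw nx" and i: "i < m"
    and B: "B \<in> carrier_mat nx nu" and K: "K \<in> carrier_mat nu nx"
    and Ab: "Ab \<in> carrier_mat nx nx" and Bb: "Bb \<in> carrier_mat nx nu" and Kb: "Kb \<in> carrier_mat nu nx"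
    and bb: "bb \<in> carrier_vec m" and db: "db \<in> carrier_vec mw"
    and Dh: "Dh \<in> carrier_mat m m" and Wh: "Wh \<in> carrier_mat mw mw"
    and x: "x1 \<in> carrier_vec nu" "x2 \<in> carrier_vec m" "x3 \<in> carrier_vec mw"
    and y: "y \<in> carrier_vec 1" and z: "z1 \<in> carrier_vec nx" "z2 \<in> carrier_vec nx"
  shows "vconcat [x1, x2, x3, y, z1, z2] \<bullet>
      (block_mat (lmi_blocks nx nu m mw P F i B K D W Ab Bb db Kb bb Dh Wh) *\<^sub>v vconcat [x1, x2, x3, y, z1, z2])
    = x1 \<bullet> x1 - 2 * y $ 0 * (x1 \<bullet> (transpose_mat Bb *\<^sub>v row P i)) + 2 * (x1 \<bullet> (Kb *\<^sub>v z2))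
      + x2 \<bullet> (Dh *\<^sub>v x2) + 2 * y $ 0 * (x2 \<bullet> bb) + x3 \<bullet> (Wh *\<^sub>v x3) + 2 * y $ 0 * (x3 \<bullet> db)
      + 2 * bb $ i * (y $ 0)\<^sup>2
      + y \<bullet> (Lop (transpose_mat B * transpose_mat (row_mat P i)) (1\<^sub>m nu)
              (transpose_mat Bb * transpose_mat (row_mat P i)) (1\<^sub>m nu) *\<^sub>v y)
      + 2 * y $ 0 * (row P i \<bullet> z1) + 2 * y $ 0 * (row P i \<bullet> (Ab *\<^sub>v z2))
      + z1 \<bullet> (Lop F (minv W) F Wh *\<^sub>v z1) + z2 \<bullet> (Lop P (minv D) P Dh *\<^sub>v z2)
      + z2 \<bullet> (Lop K (1\<^sub>m nu) Kb (1\<^sub>m nu) *\<^sub>v z2)"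
proof -
  have r: "row P i \<in> carrier_vec nx" using P i by simp
  have ns: "[nu, m, mw, 1, nx, nx] \<noteq> []"
    and vs: "list_all2 (\<lambda>v n. v \<in> carrier_vec n) [x1, x2, x3, y, z1, z2] [nu, m, mw, 1, nx, nx]"
    using x y z by simp_all
  show ?thesis
    unfolding scalar_prod_block_mat_mult_vconcat[OF lmi_blocks_carrier[OF assms(1-12)] ns ns vs vs]
    using assms r
    by (simp add: lmi_blocks_def Let_def row_mat_def col_of_def scalar_prod_self_dim_1
        scalar_prod_comm_dim[of "Kb *\<^sub>v z2" x1] scalar_prod_comm_dim[of bb x2]
        scalar_prod_comm_dim[of db x3] scalar_prod_comm_dim[of "Bb *\<^sub>v x1" "row P i"]
        scalar_prod_comm_dim[of z1 "row P i"]
        power2_eq_square algebra_simps)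
qed

lemma transpose_rpi_mat:
  assumes P: "P \<in> carrier_mat m nx" and F: "F \<in> carrier_mat mw nx" and i: "i < m"
    and A: "A \<in> carrier_mat nx nx" and B: "B \<in> carrier_mat nx nu" and K: "K \<in> carrier_mat nu nx"
    and b: "b \<in> carrier_vec m" and d: "d \<in> carrier_vec mw"
    and D: "D \<in> diag_pos m" and W: "W \<in> diag_pos mw"
  shows "transpose_mat (block_mat (rpi_blocks nx P F i A B K b d D W)) = block_mat (rpi_blocks nx P F i A B K b d D W)"
proof (rule transpose_block_mat_eq)
  have Dc: "D \<in> carrier_mat m m" "W \<in> carrier_mat mw mw" using D W by (simp_all add: diag_pos_carrier)
  show "blocks_carrier_mat (rpi_blocks nx P F i A B K b d D W) [1, nx, nx] [1, nx, nx]"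
    by (rule rpi_blocks_carrier[OF P F i A B K b d Dc])
  have sym1: "transpose_mat (scal_mat (2 * b $ i) - transpose_mat (col_of b) * D * col_of b
        - transpose_mat (col_of d) * W * col_of d)
      = scal_mat (2 * b $ i) - transpose_mat (col_of b) * D * col_of b - transpose_mat (col_of d) * W * col_of d"
    using Dc b d by (intro transpose_mat_1x1 carrier_matI) auto
  have sym2: "transpose_mat (transpose_mat F * W * F) = transpose_mat F * W * F"
    by (rule transpose_sandwich[OF F F Dc(2) transpose_diag_pos[OF W]])
  have sym3: "transpose_mat (transpose_mat P * D * P) = transpose_mat P * D * P"
    by (rule transpose_sandwich[OF P P Dc(1) transpose_diag_pos[OF D]])
  fix a c assume "a < length [1, nx, nx]" "c < length [1, nx, nx]"
  then show "rpi_blocks nx P F i A B K b d D W ! c ! a = transpose_mat (rpi_blocks nx P F i A B K b d D W ! a ! c)"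
    using sym1 sym2 sym3 by (auto simp: rpi_blocks_def less_Suc_eq numeral_eq_Suc)
qed simp

lemma transpose_lmi_mat:
  assumes P: "P \<in> carrier_mat m nx" and F: "F \<in> carrier_mat mw nx" and i: "i < m"
    and B: "B \<in> carrier_mat nx nu" and K: "K \<in> carrier_mat nu nx"
    and Ab: "Ab \<in> carrier_mat nx nx" and Bb: "Bb \<in> carrier_mat nx nu" and Kb: "Kb \<in> carrier_mat nu nx"
    and bb: "bb \<in> carrier_vec m" and db: "db \<in> carrier_vec mw"
    and D: "D \<in> diag_pos m" and W: "W \<in> diag_pos mw" and Dh: "Dh \<in> diag_pos m" and Wh: "Wh \<in> diag_pos mw"
  shows "transpose_mat (block_mat (lmi_blocks nx nu m mw P F i B K D W Ab Bb db Kb bb Dh Wh))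
    = block_mat (lmi_blocks nx nu m mw P F i B K D W Ab Bb db Kb bb Dh Wh)"
proof (rule transpose_block_mat_eq)
  have Dc: "Dh \<in> carrier_mat m m" "Wh \<in> carrier_mat mw mw" using Dh Wh by (simp_all add: diag_pos_carrier)
  show "blocks_carrier_mat (lmi_blocks nx nu m mw P F i B K D W Ab Bb db Kb bb Dh Wh)
      [nu, m, mw, 1, nx, nx] [nu, m, mw, 1, nx, nx]"
    by (rule lmi_blocks_carrier[OF P F i B K Ab Bb Kb bb db Dc])
  have Lop_sym: "transpose_mat (Lop L (minv E) L Eh) = Lop L (minv E) L Eh"
    if "L \<in> carrier_mat r nx" "E \<in> diag_pos r" "Eh \<in> diag_pos r" for L r E Eh
    using that diag_pos_carrier[OF that(3)] transpose_diag_pos[OF that(3)]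
      diag_pos_carrier[OF that(2)] transpose_diag_pos[OF that(2)] minv_minv_diag_pos[OF that(2)]
    by (intro transpose_Lop) simp_all
  have Lop_one_sym: "transpose_mat (Lop L (1\<^sub>m r) L' (1\<^sub>m r)) = Lop L (1\<^sub>m r) L' (1\<^sub>m r)"
    if "L \<in> carrier_mat r n" "L' \<in> carrier_mat r n" for L L' r n
    by (rule transpose_Lop[OF that one_carrier_mat]) (simp_all add: minv_one)
  let ?BP = "transpose_mat B * transpose_mat (row_mat P i)"
  let ?BPb = "transpose_mat Bb * transpose_mat (row_mat P i)"
  have sym4: "transpose_mat (scal_mat (2 * bb $ i) + Lop ?BP (1\<^sub>m nu) ?BPb (1\<^sub>m nu))
      = scal_mat (2 * bb $ i) + Lop ?BP (1\<^sub>m nu) ?BPb (1\<^sub>m nu)"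
    using B P by (intro transpose_mat_1x1 carrier_matI) auto
  have sym5: "transpose_mat (Lop F (minv W) F Wh) = Lop F (minv W) F Wh"
    by (rule Lop_sym[OF F W Wh])
  have sym6: "transpose_mat (Lop P (minv D) P Dh + Lop K (1\<^sub>m nu) Kb (1\<^sub>m nu))
      = Lop P (minv D) P Dh + Lop K (1\<^sub>m nu) Kb (1\<^sub>m nu)"
  proof -
    have "Lop P (minv D) P Dh \<in> carrier_mat nx nx" "Lop K (1\<^sub>m nu) Kb (1\<^sub>m nu) \<in> carrier_mat nx nx"
      using P K by (auto intro!: carrier_matI)
    then show ?thesis using Lop_sym[OF P D Dh] Lop_one_sym[OF K Kb] by (simp add: transpose_add)
  qed
  fix a c assume "a < length [nu, m, mw, 1, nx, nx]" "c < length [nu, m, mw, 1, nx, nx]"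
  then show "lmi_blocks nx nu m mw P F i B K D W Ab Bb db Kb bb Dh Wh ! c ! a
      = transpose_mat (lmi_blocks nx nu m mw P F i B K D W Ab Bb db Kb bb Dh Wh ! a ! c)"
    using sym4 sym5 sym6 transpose_diag_pos[OF Dh] transpose_diag_pos[OF Wh]
    by (auto simp: lmi_blocks_def Let_def less_Suc_eq numeral_eq_Suc)
qed simp

lemma lmi_quadratic_form_decomposition:
  assumes P: "P \<in> carrier_mat m nx" and F: "F \<in> carrier_mat mw nx" and i: "i < m"
    and B: "B \<in> carrier_mat nx nu" and K: "K \<in> carrier_mat nu nx"
    and Ab: "Ab \<in> carrier_mat nx nx" and Bb: "Bb \<in> carrier_mat nx nu" and Kb: "Kb \<in> carrier_mat nu nx"
    and bb: "bb \<in> carrier_vec m" and db: "db \<in> carrier_vec mw"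
    and D: "D \<in> diag_pos m" and W: "W \<in> diag_pos mw" and Dh: "Dh \<in> diag_pos m" and Wh: "Wh \<in> diag_pos mw"
    and x: "x1 \<in> carrier_vec nu" "x2 \<in> carrier_vec m" "x3 \<in> carrier_vec mw"
    and y: "y \<in> carrier_vec 1" and z: "z1 \<in> carrier_vec nx" "z2 \<in> carrier_vec nx"
  defines "t \<equiv> y $ 0" and "q \<equiv> transpose_mat Bb *\<^sub>v row P i" and "k \<equiv> Kb *\<^sub>v z2"
    and "g4 \<equiv> y $ 0 \<cdot>\<^sub>v (transpose_mat Bb *\<^sub>v row P i) - y $ 0 \<cdot>\<^sub>v (transpose_mat B *\<^sub>v row P i)"
    and "g5 \<equiv> F *\<^sub>v z1 - Wh *\<^sub>v (W *\<^sub>v (F *\<^sub>v z1))"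
    and "g6 \<equiv> P *\<^sub>v z2 - Dh *\<^sub>v (D *\<^sub>v (P *\<^sub>v z2))"
  shows "vconcat [x1, x2, x3, y, z1, z2] \<bullet>
      (block_mat (lmi_blocks nx nu m mw P F i B K D W Ab Bb db Kb bb Dh Wh) *\<^sub>v vconcat [x1, x2, x3, y, z1, z2])
    = vconcat [y, z1, z2] \<bullet>
        (block_mat (rpi_blocks nx P F i Ab Bb Kb bb db (minv Dh) (minv Wh)) *\<^sub>v vconcat [y, z1, z2])
      + (x1 - t \<cdot>\<^sub>v q + k) \<bullet> (x1 - t \<cdot>\<^sub>v q + k)
      + (x2 + t \<cdot>\<^sub>v (minv Dh *\<^sub>v bb)) \<bullet> (Dh *\<^sub>v (x2 + t \<cdot>\<^sub>v (minv Dh *\<^sub>v bb)))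
      + (x3 + t \<cdot>\<^sub>v (minv Wh *\<^sub>v db)) \<bullet> (Wh *\<^sub>v (x3 + t \<cdot>\<^sub>v (minv Wh *\<^sub>v db)))
      - (g4 \<bullet> g4 + g5 \<bullet> (minv Wh *\<^sub>v g5) + g6 \<bullet> (minv Dh *\<^sub>v g6) + (k - K *\<^sub>v z2) \<bullet> (k - K *\<^sub>v z2))"
proof -
  have r: "row P i \<in> carrier_vec nx" using P i by simp
  have q: "q \<in> carrier_vec nu" and k: "k \<in> carrier_vec nu"
    using r Bb Kb z by (simp_all add: q_def k_def)
  have Dhc: "Dh \<in> carrier_mat m m" "minv Dh \<in> carrier_mat m m"
    and Whc: "Wh \<in> carrier_mat mw mw" "minv Wh \<in> carrier_mat mw mw"
    using Dh Wh minv_diag_pos(1)[OF Dh] minv_diag_pos(1)[OF Wh] by (simp_all add: diag_pos_carrier)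
  note QM = lmi_quadratic_form[OF P F i B K Ab Bb Kb bb db Dhc(1) Whc(1) x y z, folded t_def q_def k_def]
  note QN = rpi_quadratic_form[OF P F i Ab Bb Kb bb db Dhc(2) Whc(2) y z, folded t_def k_def]
  have L4: "y \<bullet> (Lop (transpose_mat B * transpose_mat (row_mat P i)) (1\<^sub>m nu)
      (transpose_mat Bb * transpose_mat (row_mat P i)) (1\<^sub>m nu) *\<^sub>v y) = t * t * (q \<bullet> q) - g4 \<bullet> g4"
    using quadratic_form_Lop_one[of "transpose_mat B * transpose_mat (row_mat P i)" nu 1
        "transpose_mat Bb * transpose_mat (row_mat P i)" y] B Bb P y q r
    by (simp add: row_mat_def t_def q_def g4_def)
  have L5: "z1 \<bullet> (Lop F (minv W) F Wh *\<^sub>v z1) = (F *\<^sub>v z1) \<bullet> (minv Wh *\<^sub>v (F *\<^sub>v z1)) - g5 \<bullet> (minv Wh *\<^sub>v g5)"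
    unfolding g5_def by (rule quadratic_form_Lop_diag_pos[OF F W Wh z(1)])
  have L6: "z2 \<bullet> (Lop P (minv D) P Dh *\<^sub>v z2) = (P *\<^sub>v z2) \<bullet> (minv Dh *\<^sub>v (P *\<^sub>v z2)) - g6 \<bullet> (minv Dh *\<^sub>v g6)"
    unfolding g6_def by (rule quadratic_form_Lop_diag_pos[OF P D Dh z(2)])
  have L7: "z2 \<bullet> (Lop K (1\<^sub>m nu) Kb (1\<^sub>m nu) *\<^sub>v z2) = k \<bullet> k - (k - K *\<^sub>v z2) \<bullet> (k - K *\<^sub>v z2)"
    unfolding k_def by (rule quadratic_form_Lop_one[OF K Kb z(2)])
  have S1: "(x1 - t \<cdot>\<^sub>v q + k) \<bullet> (x1 - t \<cdot>\<^sub>v q + k)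
      = x1 \<bullet> x1 + t * t * (q \<bullet> q) + k \<bullet> k - 2 * t * (x1 \<bullet> q) + 2 * (x1 \<bullet> k) - 2 * t * (q \<bullet> k)"
    using x q k scalar_prod_comm_dim[of q x1] scalar_prod_comm_dim[of k x1] scalar_prod_comm_dim[of k q]
    by (simp add: algebra_simps)
  note S2 = diag_pos_quadratic_form_shift[OF Dh x(2) bb]
  note S3 = diag_pos_quadratic_form_shift[OF Wh x(3) db]
  have rBk: "row P i \<bullet> (Bb *\<^sub>v k) = q \<bullet> k"
    using transpose_vec_mult_scalar[OF Bb k r] by (simp add: q_def)
  show ?thesis
    unfolding QM QN L4 L5 L6 L7 S1 S2 S3 rBk by (simp add: algebra_simps power2_eq_square)
qed

section \<open>The two implications\<close>

lemma lmi_form_le_rpi_form: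
  assumes P: "P \<in> carrier_mat m nx" and F: "F \<in> carrier_mat mw nx" and i: "i < m"
    and B: "B \<in> carrier_mat nx nu" and K: "K \<in> carrier_mat nu nx"
    and Ab: "Ab \<in> carrier_mat nx nx" and Bb: "Bb \<in> carrier_mat nx nu" and Kb: "Kb \<in> carrier_mat nu nx"
    and bb: "bb \<in> carrier_vec m" and db: "db \<in> carrier_vec mw"
    and D: "D \<in> diag_pos m" and W: "W \<in> diag_pos mw" and Dh: "Dh \<in> diag_pos m" and Wh: "Wh \<in> diag_pos mw"
    and y: "y \<in> carrier_vec 1" and z: "z1 \<in> carrier_vec nx" "z2 \<in> carrier_vec nx"
  obtains x1 x2 x3 where "x1 \<in> carrier_vec nu" "x2 \<in> carrier_vec m" "x3 \<in> carrier_vec mw"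
    "vconcat [x1, x2, x3, y, z1, z2] \<bullet> (block_mat (lmi_blocks nx nu m mw P F i B K D W Ab Bb db Kb bb Dh Wh)
        *\<^sub>v vconcat [x1, x2, x3, y, z1, z2])
      \<le> vconcat [y, z1, z2] \<bullet> (block_mat (rpi_blocks nx P F i Ab Bb Kb bb db (minv Dh) (minv Wh))
        *\<^sub>v vconcat [y, z1, z2])"
proof -
  have Dhi: "minv Dh \<in> diag_pos m" and Whi: "minv Wh \<in> diag_pos mw"
    using minv_diag_pos(1) Dh Wh by blast+
  have Dhc: "Dh \<in> carrier_mat m m" "Wh \<in> carrier_mat mw mw"
    using Dh Wh by (simp_all add: diag_pos_carrier)
  have r: "row P i \<in> carrier_vec nx" using P i by simp
  txt \<open>The minimiser of the LMI form in the first three components.\<close>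
  define x1 where "x1 = y $ 0 \<cdot>\<^sub>v (transpose_mat Bb *\<^sub>v row P i) - Kb *\<^sub>v z2"
  define x2 where "x2 = (- y $ 0) \<cdot>\<^sub>v (minv Dh *\<^sub>v bb)"
  define x3 where "x3 = (- y $ 0) \<cdot>\<^sub>v (minv Wh *\<^sub>v db)"
  have x: "x1 \<in> carrier_vec nu" "x2 \<in> carrier_vec m" "x3 \<in> carrier_vec mw"
    using Bb Kb r z diag_pos_carrier[OF Dhi] diag_pos_carrier[OF Whi] bb db
    by (simp_all add: x1_def x2_def x3_def)
  have "x1 - y $ 0 \<cdot>\<^sub>v (transpose_mat Bb *\<^sub>v row P i) + Kb *\<^sub>v z2 = 0\<^sub>v nu"
    using Bb Kb r z by (intro eq_vecI) (simp_all add: x1_def)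
  moreover have "x2 + y $ 0 \<cdot>\<^sub>v (minv Dh *\<^sub>v bb) = 0\<^sub>v m"
    using diag_pos_carrier[OF Dhi] bb by (intro eq_vecI) (simp_all add: x2_def)
  moreover have "x3 + y $ 0 \<cdot>\<^sub>v (minv Wh *\<^sub>v db) = 0\<^sub>v mw"
    using diag_pos_carrier[OF Whi] db by (intro eq_vecI) (simp_all add: x3_def)
  moreover have "0 \<le> (F *\<^sub>v z1 - Wh *\<^sub>v (W *\<^sub>v (F *\<^sub>v z1))) \<bullet> (minv Wh *\<^sub>v (F *\<^sub>v z1 - Wh *\<^sub>v (W *\<^sub>v (F *\<^sub>v z1))))"
    using F z Dhc diag_pos_carrier[OF W] by (intro diag_pos_quadratic_form_nonneg[OF Whi]) simp
  moreover have "0 \<le> (P *\<^sub>v z2 - Dh *\<^sub>v (D *\<^sub>v (P *\<^sub>v z2))) \<bullet> (minv Dh *\<^sub>v (P *\<^sub>v z2 - Dh *\<^sub>v (D *\<^sub>v (P *\<^sub>v z2))))"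
    using P z Dhc diag_pos_carrier[OF D] by (intro diag_pos_quadratic_form_nonneg[OF Dhi]) simp
  ultimately have "vconcat [x1, x2, x3, y, z1, z2] \<bullet> (block_mat (lmi_blocks nx nu m mw P F i B K D W Ab Bb db Kb bb Dh Wh)
        *\<^sub>v vconcat [x1, x2, x3, y, z1, z2])
      \<le> vconcat [y, z1, z2] \<bullet> (block_mat (rpi_blocks nx P F i Ab Bb Kb bb db (minv Dh) (minv Wh))
        *\<^sub>v vconcat [y, z1, z2])"
    unfolding lmi_quadratic_form_decomposition[OF P F i B K Ab Bb Kb bb db D W Dh Wh x y z]
    using Dhc scalar_prod_self_nonneg[of "Kb *\<^sub>v z2 - K *\<^sub>v z2"]
      scalar_prod_self_nonneg[of "y $ 0 \<cdot>\<^sub>v (transpose_mat Bb *\<^sub>v row P i) - y $ 0 \<cdot>\<^sub>v (transpose_mat B *\<^sub>v row P i)"]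
    by simp
  with x that show ?thesis by blast
qed

lemma RPI_of_LMI:
  assumes P: "P \<in> carrier_mat m nx" and F: "F \<in> carrier_mat mw nx" and i: "i < m"
    and B: "B \<in> carrier_mat nx nu" and K: "K \<in> carrier_mat nu nx"
    and Ab: "Ab \<in> carrier_mat nx nx" and Bb: "Bb \<in> carrier_mat nx nu" and Kb: "Kb \<in> carrier_mat nu nx"
    and bb: "bb \<in> carrier_vec m" and db: "db \<in> carrier_vec mw"
    and D: "D \<in> diag_pos m" and W: "W \<in> diag_pos mw" and Dh: "Dh \<in> diag_pos m" and Wh: "Wh \<in> diag_pos mw"
    and lmi: "LMI nx nu m mw P F i B K D W Ab Bb db Kb bb Dh Wh"
  shows "RPI nx P F i Ab Bb Kb bb db (minv Dh) (minv Wh)"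
  unfolding RPI_iff_pos_def
proof (rule pos_def_vconcatI)
  have Dhi: "minv Dh \<in> diag_pos m" and Whi: "minv Wh \<in> diag_pos mw"
    using minv_diag_pos(1) Dh Wh by blast+
  show "block_mat (rpi_blocks nx P F i Ab Bb Kb bb db (minv Dh) (minv Wh))
      \<in> carrier_mat (sum_list [1, nx, nx]) (sum_list [1, nx, nx])"
    using diag_pos_carrier[OF Dhi] diag_pos_carrier[OF Whi]
    by (intro block_mat_carrier[OF rpi_blocks_carrier[OF P F i Ab Bb Kb bb db]]) simp_all
  show "transpose_mat (block_mat (rpi_blocks nx P F i Ab Bb Kb bb db (minv Dh) (minv Wh)))
      = block_mat (rpi_blocks nx P F i Ab Bb Kb bb db (minv Dh) (minv Wh))"
    by (rule transpose_rpi_mat[OF P F i Ab Bb Kb bb db Dhi Whi])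
  fix vs :: "real vec list" assume vs: "list_all2 (\<lambda>v n. v \<in> carrier_vec n) vs [1, nx, nx]"
    and nz: "\<not> list_all2 (\<lambda>v n. v = 0\<^sub>v n) vs [1, nx, nx]"
  then obtain y z1 z2 where vs_eq: "vs = [y, z1, z2]" by (auto simp: list_all2_Cons2)
  with vs have y: "y \<in> carrier_vec 1" and z: "z1 \<in> carrier_vec nx" "z2 \<in> carrier_vec nx" by simp_all
  obtain x1 x2 x3 where x: "x1 \<in> carrier_vec nu" "x2 \<in> carrier_vec m" "x3 \<in> carrier_vec mw"
    and le: "vconcat [x1, x2, x3, y, z1, z2] \<bullet> (block_mat (lmi_blocks nx nu m mw P F i B K D W Ab Bb db Kb bb Dh Wh)
        *\<^sub>v vconcat [x1, x2, x3, y, z1, z2])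
      \<le> vconcat vs \<bullet> (block_mat (rpi_blocks nx P F i Ab Bb Kb bb db (minv Dh) (minv Wh)) *\<^sub>v vconcat vs)"
    unfolding vs_eq by (rule lmi_form_le_rpi_form[OF P F i B K Ab Bb Kb bb db D W Dh Wh y z])
  have "block_mat (lmi_blocks nx nu m mw P F i B K D W Ab Bb db Kb bb Dh Wh)
      \<in> carrier_mat (sum_list [nu, m, mw, 1, nx, nx]) (sum_list [nu, m, mw, 1, nx, nx])"
    using Dh Wh by (intro block_mat_carrier[OF lmi_blocks_carrier[OF P F i B K Ab Bb Kb bb db]])
      (simp_all add: diag_pos_carrier)
  then have "0 < vconcat [x1, x2, x3, y, z1, z2] \<bullet> (block_mat (lmi_blocks nx nu m mw P F i B K D W Ab Bb db Kb bb Dh Wh)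
        *\<^sub>v vconcat [x1, x2, x3, y, z1, z2])"
    using lmi x y z nz
    by (intro pos_def_vconcatD[where ns = "[nu, m, mw, 1, nx, nx]"]) (simp_all add: LMI_iff_pos_def vs_eq)
  with le show "0 < vconcat vs \<bullet> (block_mat (rpi_blocks nx P F i Ab Bb Kb bb db (minv Dh) (minv Wh)) *\<^sub>v vconcat vs)"
    by linarith
qed

lemma lmi_quadratic_form_at_data:
  assumes P: "P \<in> carrier_mat m nx" and F: "F \<in> carrier_mat mw nx" and i: "i < m"
    and A: "A \<in> carrier_mat nx nx" and B: "B \<in> carrier_mat nx nu" and K: "K \<in> carrier_mat nu nx"
    and b: "b \<in> carrier_vec m" and d: "d \<in> carrier_vec mw"
    and D: "D \<in> diag_pos m" and W: "W \<in> diag_pos mw"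
    and x: "x1 \<in> carrier_vec nu" "x2 \<in> carrier_vec m" "x3 \<in> carrier_vec mw"
    and y: "y \<in> carrier_vec 1" and z: "z1 \<in> carrier_vec nx" "z2 \<in> carrier_vec nx"
  shows "vconcat [x1, x2, x3, y, z1, z2] \<bullet> (block_mat (lmi_blocks nx nu m mw P F i B K D W A B d K b (minv D) (minv W))
        *\<^sub>v vconcat [x1, x2, x3, y, z1, z2])
    = vconcat [y, z1, z2] \<bullet> (block_mat (rpi_blocks nx P F i A B K b d D W) *\<^sub>v vconcat [y, z1, z2])
      + (x1 - y $ 0 \<cdot>\<^sub>v (transpose_mat B *\<^sub>v row P i) + K *\<^sub>v z2) \<bullet> (x1 - y $ 0 \<cdot>\<^sub>v (transpose_mat B *\<^sub>v row P i) + K *\<^sub>v z2)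
      + (x2 + y $ 0 \<cdot>\<^sub>v (D *\<^sub>v b)) \<bullet> (minv D *\<^sub>v (x2 + y $ 0 \<cdot>\<^sub>v (D *\<^sub>v b)))
      + (x3 + y $ 0 \<cdot>\<^sub>v (W *\<^sub>v d)) \<bullet> (minv W *\<^sub>v (x3 + y $ 0 \<cdot>\<^sub>v (W *\<^sub>v d)))"
proof -
  have Dh: "minv D \<in> diag_pos m" and Wh: "minv W \<in> diag_pos mw"
    using minv_diag_pos(1) D W by blast+
  have Dc: "D \<in> carrier_mat m m" "W \<in> carrier_mat mw mw"
    using D W by (simp_all add: diag_pos_carrier)
  have r: "row P i \<in> carrier_vec nx" using P i by simp
  have "y $ 0 \<cdot>\<^sub>v (transpose_mat B *\<^sub>v row P i) - y $ 0 \<cdot>\<^sub>v (transpose_mat B *\<^sub>v row P i) = 0\<^sub>v nu"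
    using B r by (intro eq_vecI) simp_all
  moreover have "v - minv W *\<^sub>v (W *\<^sub>v v) = 0\<^sub>v mw" if "v \<in> carrier_vec mw" for v
    using that Dc minv_diag_pos(3)[OF W] diag_pos_carrier[OF Wh] by (simp flip: mult_mat_vec_assoc_dim)
  moreover have "v - minv D *\<^sub>v (D *\<^sub>v v) = 0\<^sub>v m" if "v \<in> carrier_vec m" for v
    using that Dc minv_diag_pos(3)[OF D] diag_pos_carrier[OF Dh] by (simp flip: mult_mat_vec_assoc_dim)
  moreover have "K *\<^sub>v z2 - K *\<^sub>v z2 = 0\<^sub>v nu"
    using K z by (intro eq_vecI) simp_all
  ultimately show ?thesis
    unfolding lmi_quadratic_form_decomposition[OF P F i B K A B K b d D W Dh Wh x y z]
      minv_minv_diag_pos[OF D] minv_minv_diag_pos[OF W]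
    using F P z Dc by simp
qed

lemma lmi_form_pos_at_data:
  assumes P: "P \<in> carrier_mat m nx" and F: "F \<in> carrier_mat mw nx" and i: "i < m"
    and A: "A \<in> carrier_mat nx nx" and B: "B \<in> carrier_mat nx nu" and K: "K \<in> carrier_mat nu nx"
    and b: "b \<in> carrier_vec m" and d: "d \<in> carrier_vec mw"
    and D: "D \<in> diag_pos m" and W: "W \<in> diag_pos mw"
    and rpi: "RPI nx P F i A B K b d D W"
    and x: "x1 \<in> carrier_vec nu" "x2 \<in> carrier_vec m" "x3 \<in> carrier_vec mw"
    and y: "y \<in> carrier_vec 1" and z: "z1 \<in> carrier_vec nx" "z2 \<in> carrier_vec nx"
    and nz: "\<not> list_all2 (\<lambda>v n. v = 0\<^sub>v n) [x1, x2, x3, y, z1, z2] [nu, m, mw, 1, nx, nx]"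
  shows "0 < vconcat [x1, x2, x3, y, z1, z2] \<bullet> (block_mat (lmi_blocks nx nu m mw P F i B K D W A B d K b (minv D) (minv W))
        *\<^sub>v vconcat [x1, x2, x3, y, z1, z2])"
proof -
  have Dh: "minv D \<in> diag_pos m" and Wh: "minv W \<in> diag_pos mw"
    using minv_diag_pos(1) D W by blast+
  have Dc: "D \<in> carrier_mat m m" "W \<in> carrier_mat mw mw"
    using D W by (simp_all add: diag_pos_carrier)
  note decomposition = lmi_quadratic_form_at_data[OF P F i A B K b d D W x y z]
  let ?N = "block_mat (rpi_blocks nx P F i A B K b d D W)"
  show ?thesis
  proof (cases "list_all2 (\<lambda>v n. v = 0\<^sub>v n) [y, z1, z2] [1, nx, nx]")
    case False
    have "0 < vconcat [y, z1, z2] \<bullet> (?N *\<^sub>v vconcat [y, z1, z2])"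
      using rpi block_mat_carrier[OF rpi_blocks_carrier[OF P F i A B K b d Dc]] y z False
      by (intro pos_def_vconcatD[where ns = "[1, nx, nx]"]) (simp_all add: RPI_iff_pos_def)
    moreover have "0 \<le> (x2 + y $ 0 \<cdot>\<^sub>v (D *\<^sub>v b)) \<bullet> (minv D *\<^sub>v (x2 + y $ 0 \<cdot>\<^sub>v (D *\<^sub>v b)))"
      using x b Dc by (intro diag_pos_quadratic_form_nonneg[OF Dh]) simp
    moreover have "0 \<le> (x3 + y $ 0 \<cdot>\<^sub>v (W *\<^sub>v d)) \<bullet> (minv W *\<^sub>v (x3 + y $ 0 \<cdot>\<^sub>v (W *\<^sub>v d)))"
      using x d Dc by (intro diag_pos_quadratic_form_nonneg[OF Wh]) simp
    ultimately show ?thesis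
      unfolding decomposition using scalar_prod_self_nonneg by (smt (verit))
  next
    case True
    then have yz0: "y = 0\<^sub>v 1" "z1 = 0\<^sub>v nx" "z2 = 0\<^sub>v nx" by simp_all
    have r: "row P i \<in> carrier_vec nx" using P i by simp
    have "vconcat [y, z1, z2] \<bullet> (?N *\<^sub>v vconcat [y, z1, z2]) = 0"
      unfolding rpi_quadratic_form[OF P F i A B K b d Dc y z] using F P Dc yz0 by simp
    moreover have "x1 - 0 \<cdot>\<^sub>v (transpose_mat B *\<^sub>v row P i) + 0\<^sub>v nu = x1"
      "x2 + 0 \<cdot>\<^sub>v (D *\<^sub>v b) = x2" "x3 + 0 \<cdot>\<^sub>v (W *\<^sub>v d) = x3"
      using x B r Dc b d by (auto intro!: eq_vecI)
    ultimately have Q: "vconcat [x1, x2, x3, y, z1, z2] \<bullet> (block_mat (lmi_blocks nx nu m mw P F i B K D W A B d K b (minv D) (minv W))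
        *\<^sub>v vconcat [x1, x2, x3, y, z1, z2]) = x1 \<bullet> x1 + x2 \<bullet> (minv D *\<^sub>v x2) + x3 \<bullet> (minv W *\<^sub>v x3)"
      unfolding decomposition using yz0 carrier_matD[OF K] by simp
    have "0 \<le> x1 \<bullet> x1" "0 \<le> x2 \<bullet> (minv D *\<^sub>v x2)" "0 \<le> x3 \<bullet> (minv W *\<^sub>v x3)"
      using scalar_prod_self_nonneg diag_pos_quadratic_form_nonneg[OF Dh x(2)]
        diag_pos_quadratic_form_nonneg[OF Wh x(3)] by simp_all
    moreover have "x1 \<noteq> 0\<^sub>v nu \<Longrightarrow> 0 < x1 \<bullet> x1"
      using diag_pos_quadratic_form_pos[OF one_diag_pos x(1)] x(1) by simp
    moreover have "x2 \<noteq> 0\<^sub>v m \<Longrightarrow> 0 < x2 \<bullet> (minv D *\<^sub>v x2)"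
      by (rule diag_pos_quadratic_form_pos[OF Dh x(2)])
    moreover have "x3 \<noteq> 0\<^sub>v mw \<Longrightarrow> 0 < x3 \<bullet> (minv W *\<^sub>v x3)"
      by (rule diag_pos_quadratic_form_pos[OF Wh x(3)])
    moreover have "x1 \<noteq> 0\<^sub>v nu \<or> x2 \<noteq> 0\<^sub>v m \<or> x3 \<noteq> 0\<^sub>v mw"
      using nz yz0 by simp
    ultimately show ?thesis unfolding Q by linarith
  qed
qed

lemma LMI_of_RPI:
  assumes P: "P \<in> carrier_mat m nx" and F: "F \<in> carrier_mat mw nx" and i: "i < m"
    and A: "A \<in> carrier_mat nx nx" and B: "B \<in> carrier_mat nx nu" and K: "K \<in> carrier_mat nu nx"
    and b: "b \<in> carrier_vec m" and d: "d \<in> carrier_vec mw"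
    and D: "D \<in> diag_pos m" and W: "W \<in> diag_pos mw"
    and rpi: "RPI nx P F i A B K b d D W"
  shows "LMI nx nu m mw P F i B K D W A B d K b (minv D) (minv W)"
  unfolding LMI_iff_pos_def
proof (rule pos_def_vconcatI)
  have Dh: "minv D \<in> diag_pos m" and Wh: "minv W \<in> diag_pos mw"
    using minv_diag_pos(1) D W by blast+
  show "block_mat (lmi_blocks nx nu m mw P F i B K D W A B d K b (minv D) (minv W))
      \<in> carrier_mat (sum_list [nu, m, mw, 1, nx, nx]) (sum_list [nu, m, mw, 1, nx, nx])"
    using diag_pos_carrier[OF Dh] diag_pos_carrier[OF Wh]
    by (intro block_mat_carrier[OF lmi_blocks_carrier[OF P F i B K A B K b d]]) simp_all
  show "transpose_mat (block_mat (lmi_blocks nx nu m mw P F i B K D W A B d K b (minv D) (minv W)))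
      = block_mat (lmi_blocks nx nu m mw P F i B K D W A B d K b (minv D) (minv W))"
    by (rule transpose_lmi_mat[OF P F i B K A B K b d D W Dh Wh])
  fix vs :: "real vec list" assume vs: "list_all2 (\<lambda>v n. v \<in> carrier_vec n) vs [nu, m, mw, 1, nx, nx]"
    and nz: "\<not> list_all2 (\<lambda>v n. v = 0\<^sub>v n) vs [nu, m, mw, 1, nx, nx]"
  then obtain x1 x2 x3 y z1 z2 where vs_eq: "vs = [x1, x2, x3, y, z1, z2]"
    by (auto simp: list_all2_Cons2)
  with vs nz show "0 < vconcat vs \<bullet> (block_mat (lmi_blocks nx nu m mw P F i B K D W A B d K b (minv D) (minv W))
      *\<^sub>v vconcat vs)"
    using lmi_form_pos_at_data[OF P F i A B K b d D W rpi] by simp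
qed

theorem theorem3:
  fixes nx nu m mw i :: nat
    and P F A B K D W :: "real mat" and b d :: "real vec"
  assumes P: "P \<in> carrier_mat m nx" and F: "F \<in> carrier_mat mw nx"
    and i: "i < m"
    and A: "A \<in> carrier_mat nx nx" and B: "B \<in> carrier_mat nx nu"
    and K: "K \<in> carrier_mat nu nx"
    and b: "b \<in> carrier_vec m" and d: "d \<in> carrier_vec mw"
    and D: "D \<in> diag_pos m" and W: "W \<in> diag_pos mw"
    and rpi: "RPI nx P F i A B K b d D W"
  shows "LMI nx nu m mw P F i B K D W A B d K b (minv D) (minv W)
       \<and> (\<forall>Ab Bb Kb bb db Dh Wh.
            Ab \<in> carrier_mat nx nx \<longrightarrow> Bb \<in> carrier_mat nx nu \<longrightarrow> Kb \<in> carrier_mat nu nx \<longrightarrow>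
            bb \<in> carrier_vec m \<longrightarrow> db \<in> carrier_vec mw \<longrightarrow>
            Dh \<in> diag_pos m \<longrightarrow> Wh \<in> diag_pos mw \<longrightarrow>
            LMI nx nu m mw P F i B K D W Ab Bb db Kb bb Dh Wh \<longrightarrow>
            RPI nx P F i Ab Bb Kb bb db (minv Dh) (minv Wh))"
proof (intro conjI allI impI)
  show "LMI nx nu m mw P F i B K D W A B d K b (minv D) (minv W)"
    by (rule LMI_of_RPI[OF P F i A B K b d D W rpi])
next
  fix Ab Bb Kb bb db Dh Wh
  assume "Ab \<in> carrier_mat nx nx" "Bb \<in> carrier_mat nx nu" "Kb \<in> carrier_mat nu nx"
    "bb \<in> carrier_vec m" "db \<in> carrier_vec mw" "Dh \<in> diag_pos m" "Wh \<in> diag_pos mw"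
    "LMI nx nu m mw P F i B K D W Ab Bb db Kb bb Dh Wh"
  then show "RPI nx P F i Ab Bb Kb bb db (minv Dh) (minv Wh)"
    by (intro RPI_of_LMI[OF P F i B K]) (use D W in simp_all)
qed

end
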